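(* There exists a function $f\colon \mathbb{R}_{>0} \to \mathbb{N}$ such that for every $\epsilon>0$ and every positive integer $k$, if $T$ is an $n$-vertex tournament with $n \geq 2k+1+\epsilon k$, then $\mathrm{sinv}_k(T) \leq f(\epsilon)$.
   Context: A tournament is an orientation of a complete graph. For a digraph $D$ and $X \subseteq V(D)$, inverting $X$ means reversing the direction of every arc of $D$ with both endvertices in $X$. A digraph $D$ is $k$-strong if $|V(D)|\ge k+1$ and $D-S$ is strongly connected for every $S\subseteq V(D)$ with $|S|<k$. $\mathrm{sinv}_k(D)$ is the minimum number of sets whose successive inversion transforms $D$ into a $k$-strong digraph. *)

theory Defs
  imports Complex_Main "HOL-Library.Extended_Nat"
begin

text \<open>A digraph is given by a vertex set V and an arc set A (pairs (u,v) meaning u -> v).\<close>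

definition tournament :: "'a set \<Rightarrow> ('a \<times> 'a) set \<Rightarrow> bool" where
  "tournament V A \<longleftrightarrow> A \<subseteq> V \<times> V \<and> (\<forall>v. (v, v) \<notin> A) \<and>
     (\<forall>u\<in>V. \<forall>v\<in>V. u \<noteq> v \<longrightarrow> ((u, v) \<in> A \<longleftrightarrow> (v, u) \<notin> A))"

definition invert :: "'a set \<Rightarrow> ('a \<times> 'a) set \<Rightarrow> ('a \<times> 'a) set" where
  "invert X A = {(u, v). (u, v) \<in> A \<and> \<not> (u \<in> X \<and> v \<in> X)}
              \<union> {(v, u) | u v. (u, v) \<in> A \<and> u \<in> X \<and> v \<in> X}"

definition invert_seq :: "'a set list \<Rightarrow> ('a \<times> 'a) set \<Rightarrow> ('a \<times> 'a) set" where
  "invert_seq Xs A = fold invert Xs A"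

definition strongly_connected :: "'a set \<Rightarrow> ('a \<times> 'a) set \<Rightarrow> bool" where
  "strongly_connected V A \<longleftrightarrow> (\<forall>u\<in>V. \<forall>v\<in>V. (u, v) \<in> (A \<inter> (V \<times> V))\<^sup>*)"

definition k_strong :: "nat \<Rightarrow> 'a set \<Rightarrow> ('a \<times> 'a) set \<Rightarrow> bool" where
  "k_strong k V A \<longleftrightarrow> card V \<ge> k + 1 \<and>
     (\<forall>S\<subseteq>V. card S < k \<longrightarrow> strongly_connected (V - S) (A \<inter> ((V - S) \<times> (V - S))))"

text \<open>sinv_k(D): minimum number of inversions (of subsets of V) making D k-strong;
  infinity if impossible.\<close>
definition sinv :: "nat \<Rightarrow> 'a set \<Rightarrow> ('a \<times> 'a) set \<Rightarrow> enat" where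
  "sinv k V A = Inf {enat (length Xs) | Xs. set Xs \<subseteq> Pow V \<and> k_strong k V (invert_seq Xs A)}"

end

theory Submission
  imports Defs "HOL-Library.FuncSet"
begin

(* For small n, where small depends only on \<epsilon>, invert one pair at a time every arc disagreeing
   with the rotational tournament, which is k-strong as soon as n \<ge> 2k + 1; this costs at most 2^n
   inversions. For large n, give every vertex a nonzero label in GF(2)^t and invert, for every
   coordinate i, the vertices whose label has a 1 in position i: an arc is then reversed iff the
   labels of its ends have odd inner product. Counting labellings shows that one of them gives
   every vertex in- and out-degree at least k - 1 + n/D and leaves an arc from any set of about
   n/D vertices to any disjoint one, which forces k-strong connectivity. Both t and D depend only
   on \<epsilon>. *)

section \<open>Inversions, tournaments and k-strong digraphs\<close>

lemma mem_invert_iff: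
  "(u, v) \<in> invert X A \<longleftrightarrow> (if u \<in> X \<and> v \<in> X then (v, u) \<in> A else (u, v) \<in> A)"
  by (auto simp: invert_def)

lemma mem_invert_seq_iff:
  "(u, v) \<in> invert_seq Xs A \<longleftrightarrow>
     (if odd (length (filter (\<lambda>X. u \<in> X \<and> v \<in> X) Xs)) then (v, u) \<in> A else (u, v) \<in> A)"
  unfolding invert_seq_def
proof (induction Xs arbitrary: A)
  case Nil
  then show ?case by simp
next
  case (Cons X Xs)
  then show ?case by (auto simp: mem_invert_iff)
qed

lemma sinv_le_length:
  assumes "set Xs \<subseteq> Pow V" and "k_strong k V (invert_seq Xs A)"
  shows "sinv k V A \<le> enat (length Xs)"
  unfolding sinv_def by (rule Inf_lower) (use assms in blast)

lemma tournament_irrefl: "tournament V T \<Longrightarrow> (v, v) \<notin> T"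
  unfolding tournament_def by blast

lemma tournament_flip_iff:
  assumes "tournament V T" "u \<in> V" "v \<in> V" "u \<noteq> v"
  shows "(v, u) \<in> T \<longleftrightarrow> (u, v) \<notin> T"
  using assms unfolding tournament_def by blast

lemma tournament_converse: "tournament V T \<Longrightarrow> tournament V (T\<inverse>)"
  unfolding tournament_def by blast

lemma k_strong_mono: "k_strong k V A \<Longrightarrow> A \<subseteq> B \<Longrightarrow> k_strong k V B"
  unfolding k_strong_def strongly_connected_def
  by (meson Int_mono order_refl rtrancl_mono subsetD)

lemma card_Diff_ge_if_le:
  assumes "finite B" "card B < k" "k - 1 + s \<le> card A"
  shows "s \<le> card (A - B)"
  using diff_card_le_card_Diff[OF assms(1), of A] assms(2,3) by linarith

text \<open>Removing fewer than k vertices leaves every vertex with s out- and s in-neighbours,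
  and two such neighbourhoods either meet or are joined by an arc: so any two remaining
  vertices are joined by a path of length at most 3.\<close>

lemma k_strong_if_degrees_and_cross_arcs:
  assumes fin: "finite V" and card_V: "k + 1 \<le> card V"
    and out_deg: "\<And>u. u \<in> V \<Longrightarrow> k - 1 + s \<le> card {w \<in> V. (u, w) \<in> A}"
    and in_deg: "\<And>u. u \<in> V \<Longrightarrow> k - 1 + s \<le> card {w \<in> V. (w, u) \<in> A}"
    and cross: "\<And>P Q. P \<subseteq> V \<Longrightarrow> Q \<subseteq> V \<Longrightarrow> P \<inter> Q = {} \<Longrightarrow> card P = s \<Longrightarrow> card Q = s \<Longrightarrow>
                  \<exists>a\<in>P. \<exists>b\<in>Q. (a, b) \<in> A"
  shows "k_strong k V A"
  unfolding k_strong_def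
proof (intro conjI card_V allI impI)
  fix S assume S: "S \<subseteq> V" "card S < k"
  have fin_S: "finite S" using S fin finite_subset by blast
  let ?E = "A \<inter> ((V - S) \<times> (V - S))"
  show "strongly_connected (V - S) ?E"
    unfolding strongly_connected_def
  proof (intro ballI)
    fix u v assume u: "u \<in> V - S" and v: "v \<in> V - S"
    define Nu where "Nu = {w \<in> V. (u, w) \<in> A} - S"
    define Nv where "Nv = {w \<in> V. (w, v) \<in> A} - S"
    have "s \<le> card Nu" unfolding Nu_def using card_Diff_ge_if_le[OF fin_S S(2) out_deg] u by simp
    have "s \<le> card Nv" unfolding Nv_def using card_Diff_ge_if_le[OF fin_S S(2) in_deg] v by simp
    have out_edge: "(u, a) \<in> ?E" if "a \<in> Nu" for a
      using that u unfolding Nu_def by auto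
    have in_edge: "(b, v) \<in> ?E" if "b \<in> Nv" for b
      using that v unfolding Nv_def by auto
    have "?E \<inter> ((V - S) \<times> (V - S)) = ?E" by blast
    moreover have "(u, v) \<in> ?E\<^sup>*"
    proof (cases "Nu \<inter> Nv = {}")
      case False
      then obtain w where "w \<in> Nu" "w \<in> Nv" by blast
      then show ?thesis
        using out_edge in_edge by (meson converse_rtrancl_into_rtrancl r_into_rtrancl)
    next
      case True
      obtain P where P: "P \<subseteq> Nu" "card P = s" using obtain_subset_with_card_n[OF \<open>s \<le> card Nu\<close>] by metis
      obtain Q where Q: "Q \<subseteq> Nv" "card Q = s" using obtain_subset_with_card_n[OF \<open>s \<le> card Nv\<close>] by metis
      have "P \<subseteq> V" "Q \<subseteq> V" "P \<inter> Q = {}" using P Q True unfolding Nu_def Nv_def by auto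
      then obtain a b where ab: "a \<in> P" "b \<in> Q" "(a, b) \<in> A" using cross P(2) Q(2) by metis
      then have "(a, b) \<in> ?E" using P Q unfolding Nu_def Nv_def by auto
      then show ?thesis
        using out_edge in_edge ab P Q by (meson converse_rtrancl_into_rtrancl r_into_rtrancl subsetD)
    qed
    ultimately show "(u, v) \<in> (?E \<inter> ((V - S) \<times> (V - S)))\<^sup>*" by simp
  qed
qed

section \<open>Small tournaments\<close>

text \<open>The rotational tournament on \<open>g 0, \<dots>, g (n - 1)\<close>: \<open>(j + n - i) mod n\<close> is the cyclic
  distance from i to j, and each vertex dominates the next \<open>(n - 1) div 2\<close> vertices.\<close>

definition circulant :: "(nat \<Rightarrow> 'a) \<Rightarrow> nat \<Rightarrow> ('a \<times> 'a) set" where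
  "circulant g n = {(g i, g j) | i j. i < n \<and> j < n \<and> (j + n - i) mod n \<in> {1..(n - 1) div 2}}"

lemma cyclic_dist_add_mod:
  fixes i e n :: nat
  assumes "i < n" "e < n"
  shows "((i + e) mod n + n - i) mod n = e"
proof (cases "i + e < n")
  case False
  then have "(i + e) mod n = i + e - n" using assms by (simp add: le_mod_geq)
  then show ?thesis using assms False by simp
qed (use assms in simp)

lemma cyclic_dist_less: "(i::nat) < j \<Longrightarrow> j < n \<Longrightarrow> (j + n - i) mod n = j - i"
  by (metis Nat.add_diff_assoc2 less_imp_diff_less less_or_eq_imp_le mod_add_self2 mod_less)

lemma cyclic_dist_sum:
  fixes i j n :: nat
  assumes "i < n" "j < n" "i \<noteq> j"
  shows "(j + n - i) mod n + (i + n - j) mod n = n"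
proof (cases "i < j")
  case True
  moreover have "(i + n - j) mod n = i + n - j" using True assms by simp
  ultimately show ?thesis using assms cyclic_dist_less[of i j n] by simp
next
  case False
  then have "j < i" using assms by simp
  moreover have "(j + n - i) mod n = j + n - i" using \<open>j < i\<close> assms by simp
  ultimately show ?thesis using assms cyclic_dist_less[of j i n] by simp
qed

lemma circulant_arc:
  assumes "i < n" "1 \<le> e" "e \<le> (n - 1) div 2"
  shows "(g i, g ((i + e) mod n)) \<in> circulant g n"
proof -
  have "e < n" using assms by linarith
  then show ?thesis
    unfolding circulant_def using assms cyclic_dist_add_mod[OF \<open>i < n\<close>] by fastforce
qed

lemma circulant_antisym:
  assumes "inj_on g {0..<n}" "(u, v) \<in> circulant g n"
  shows "(v, u) \<notin> circulant g n"
proof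
  assume "(v, u) \<in> circulant g n"
  then obtain i j where ij: "v = g i" "u = g j" "i < n" "j < n" "(j + n - i) mod n \<in> {1..(n - 1) div 2}"
    unfolding circulant_def by blast
  moreover obtain i' j' where "u = g i'" "v = g j'" "i' < n" "j' < n"
      "(j' + n - i') mod n \<in> {1..(n - 1) div 2}"
    using assms(2) unfolding circulant_def by blast
  moreover have "i' = j" "j' = i"
    using inj_onD[OF assms(1)] calculation by auto
  ultimately have "(i + n - j) mod n \<in> {1..(n - 1) div 2}" by simp
  moreover have "i \<noteq> j" using ij by auto
  ultimately show False using ij cyclic_dist_sum[of i n j] by auto
qed

lemma circulant_step_avoiding:
  assumes g: "bij_betw g {0..<n} V" and S: "finite S" "card S < k" and k: "k \<le> (n - 1) div 2"
    and i: "i < n"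
  obtains e where "1 \<le> e" "e \<le> (n - 1) div 2" "g ((i + e) mod n) \<notin> S"
proof -
  let ?h = "(n - 1) div 2"
  have "inj_on (\<lambda>e. (i + e) mod n) {1..?h}"
    by (rule inj_on_inverseI[where g = "\<lambda>j. (j + n - i) mod n"])
      (use cyclic_dist_add_mod[OF i] i in auto)
  moreover have "inj_on g ((\<lambda>e. (i + e) mod n) ` {1..?h})"
    using bij_betw_imp_inj_on[OF g] by (rule inj_on_subset) (use i in auto)
  ultimately have "inj_on (g \<circ> (\<lambda>e. (i + e) mod n)) {1..?h}"
    by (rule comp_inj_on)
  then have "card ((\<lambda>e. g ((i + e) mod n)) ` {1..?h}) = ?h"
    by (simp add: card_image comp_def)
  then have "\<not> (\<lambda>e. g ((i + e) mod n)) ` {1..?h} \<subseteq> S"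
    using card_mono[OF S(1), of "(\<lambda>e. g ((i + e) mod n)) ` {1..?h}"] S(2) k by linarith
  then show ?thesis using that by force
qed

text \<open>From i we advance by a step of length at most \<open>(n - 1) div 2\<close> avoiding S and induct on the
  remaining cyclic distance d.\<close>

lemma circulant_path:
  assumes g: "bij_betw g {0..<n} V" and S: "finite S" "card S < k" and k: "k \<le> (n - 1) div 2"
  shows "d < n \<Longrightarrow> i < n \<Longrightarrow> g i \<notin> S \<Longrightarrow> g ((i + d) mod n) \<notin> S \<Longrightarrow>
    (g i, g ((i + d) mod n)) \<in> (circulant g n \<inter> (V - S) \<times> (V - S))\<^sup>*"
proof (induction d arbitrary: i rule: less_induct)
  case (less d)
  let ?h = "(n - 1) div 2"
  let ?E = "circulant g n \<inter> (V - S) \<times> (V - S)"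
  have g_V: "g j \<in> V" if "j < n" for j using g that unfolding bij_betw_def by auto
  have edge: "(g i, g ((i + e) mod n)) \<in> ?E" if "1 \<le> e" "e \<le> ?h" "g ((i + e) mod n) \<notin> S" for e
    using circulant_arc[OF less.prems(2) that(1,2)] that(3) less.prems(2,3) g_V by simp
  consider "d = 0" | "1 \<le> d" "d \<le> ?h" | "?h < d" by linarith
  then show ?case
  proof cases
    case 1
    then show ?thesis using less.prems by simp
  next
    case 2
    show ?thesis using edge[OF 2 less.prems(4)] by blast
  next
    case 3
    obtain e where e: "1 \<le> e" "e \<le> ?h" "g ((i + e) mod n) \<notin> S"
      using circulant_step_avoiding[OF g S k less.prems(2)] .
    have "e < d" using e(2) 3 by linarith
    have "((i + e) mod n + (d - e)) mod n = (i + e + (d - e)) mod n"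
      by (rule mod_add_left_eq)
    also have "i + e + (d - e) = i + d" using \<open>e < d\<close> by simp
    finally have shift: "((i + e) mod n + (d - e)) mod n = (i + d) mod n" .
    have "d - e < d" "d - e < n" "(i + e) mod n < n"
      using \<open>e < d\<close> e(1) less.prems(1,2) by auto
    from less.IH[OF this e(3)]
    have "(g ((i + e) mod n), g ((i + d) mod n)) \<in> ?E\<^sup>*"
      using less.prems(4) unfolding shift by blast
    then show ?thesis using edge[OF e] by (meson converse_rtrancl_into_rtrancl)
  qed
qed

lemma k_strong_circulant:
  assumes g: "bij_betw g {0..<card V} V" and n: "2 * k + 1 \<le> card V"
  shows "k_strong k V (circulant g (card V))"
  unfolding k_strong_def
proof (intro conjI allI impI)
  show "k + 1 \<le> card V" using n by linarith
next
  fix S assume S: "S \<subseteq> V" "card S < k"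
  let ?n = "card V"
  have "finite S" using S(1) g finite_subset bij_betw_finite by blast
  have k: "k \<le> (?n - 1) div 2" using n by linarith
  have "circulant g ?n \<subseteq> V \<times> V"
    using g unfolding circulant_def bij_betw_def by auto
  then have E: "circulant g ?n \<inter> (V - S) \<times> (V - S) \<inter> (V - S) \<times> (V - S) = circulant g ?n \<inter> (V - S) \<times> (V - S)"
    by blast
  show "strongly_connected (V - S) (circulant g ?n \<inter> (V - S) \<times> (V - S))"
    unfolding strongly_connected_def E
  proof (intro ballI)
    fix u v assume u: "u \<in> V - S" and v: "v \<in> V - S"
    have "u \<in> g ` {0..<?n}" "v \<in> g ` {0..<?n}" using u v g by (auto simp: bij_betw_def)
    then obtain i j where i: "i < ?n" "u = g i" and j: "j < ?n" "v = g j" by auto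
    have "(i + (j + ?n - i) mod ?n) mod ?n = (i + (j + ?n - i)) mod ?n"
      by (rule mod_add_right_eq)
    also have "i + (j + ?n - i) = j + ?n" using i by simp
    finally have "(i + (j + ?n - i) mod ?n) mod ?n = j" using j by simp
    then show "(u, v) \<in> (circulant g ?n \<inter> (V - S) \<times> (V - S))\<^sup>*"
      using circulant_path[OF g \<open>finite S\<close> S(2) k, of "(j + ?n - i) mod ?n" i] i j u v by simp
  qed
qed

lemma invert_seq_superset_of_antisym:
  assumes fin: "finite V" and T: "tournament V T" and R: "R \<subseteq> V \<times> V"
    and antisym: "\<And>u v. (u, v) \<in> R \<Longrightarrow> (v, u) \<notin> R"
  shows "\<exists>Xs. set Xs \<subseteq> Pow V \<and> length Xs \<le> 2 ^ card V \<and> R \<subseteq> invert_seq Xs T"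
proof -
  define D where "D = {{u, v} | u v. (u, v) \<in> R - T}"
  have D_V: "D \<subseteq> Pow V" using R unfolding D_def by auto
  then have "finite D" using fin by (meson finite_Pow_iff finite_subset)
  then obtain Xs where Xs: "distinct Xs" "set Xs = D" using finite_distinct_list by blast
  have len: "length Xs \<le> 2 ^ card V"
    using distinct_card[OF Xs(1)] Xs(2) card_mono[OF _ D_V] fin by (simp add: card_Pow)
  have "(u, v) \<in> invert_seq Xs T" if uv: "(u, v) \<in> R" for u v
  proof -
    have "u \<noteq> v" using antisym[OF uv] uv by blast
    have "u \<in> V" "v \<in> V" using uv R by auto
    have "{u, v} \<in> D \<longleftrightarrow> (u, v) \<notin> T"
    proof
      assume "{u, v} \<in> D"
      then obtain a b where "{u, v} = {a, b}" "(a, b) \<in> R - T" unfolding D_def by blast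
      then show "(u, v) \<notin> T" using antisym[OF uv] by (auto simp: doubleton_eq_iff)
    qed (use uv in \<open>auto simp: D_def\<close>)
    moreover have "{X \<in> D. u \<in> X \<and> v \<in> X} = {{u, v}} \<inter> D"
      using \<open>u \<noteq> v\<close> unfolding D_def by auto
    moreover have "length (filter (\<lambda>X. u \<in> X \<and> v \<in> X) Xs) = card {X \<in> D. u \<in> X \<and> v \<in> X}"
      using Xs by (simp add: distinct_length_filter Int_def conj_commute)
    ultimately have "length (filter (\<lambda>X. u \<in> X \<and> v \<in> X) Xs) = (if (u, v) \<in> T then 0 else 1)"
      by simp
    then show ?thesis
      unfolding mem_invert_seq_iff
      using tournament_flip_iff[OF T \<open>u \<in> V\<close> \<open>v \<in> V\<close> \<open>u \<noteq> v\<close>] by simp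
  qed
  then have "R \<subseteq> invert_seq Xs T" by auto
  with len show ?thesis using D_V Xs(2) by (intro exI[of _ Xs]) simp
qed

lemma sinv_le_two_pow_card:
  assumes fin: "finite V" and T: "tournament V T" and n: "2 * k + 1 \<le> card V"
  shows "sinv k V T \<le> enat (2 ^ card V)"
proof -
  obtain g where g: "bij_betw g {0..<card V} V" using ex_bij_betw_nat_finite[OF fin] by blast
  have "circulant g (card V) \<subseteq> V \<times> V"
    using g unfolding circulant_def bij_betw_def by auto
  moreover have "inj_on g {0..<card V}" using g by (rule bij_betw_imp_inj_on)
  ultimately obtain Xs where Xs: "set Xs \<subseteq> Pow V" "length Xs \<le> 2 ^ card V"
      "circulant g (card V) \<subseteq> invert_seq Xs T"
    using invert_seq_superset_of_antisym[OF fin T _ circulant_antisym] by blast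
  have "k_strong k V (invert_seq Xs T)"
    using k_strong_mono[OF k_strong_circulant[OF g n] Xs(3)] .
  then have "sinv k V T \<le> enat (length Xs)" by (rule sinv_le_length[OF Xs(1)])
  also have "\<dots> \<le> enat (2 ^ card V)" using Xs(2) by simp
  finally show ?thesis .
qed

section \<open>Parity counting\<close>

text \<open>Subsets of a finite set U are the vectors of \<open>GF(2)^U\<close>: addition is symmetric difference
  and the parity of \<open>card (a \<inter> x)\<close> is the standard bilinear form.\<close>

definition parity_perp :: "'a set \<Rightarrow> 'a set set \<Rightarrow> 'a set set" where
  "parity_perp U W = {x \<in> Pow U. \<forall>w\<in>W. even (card (w \<inter> x))}"

lemma odd_card_sym_diff_Int_iff:
  assumes "finite x"
  shows "odd (card (sym_diff a b \<inter> x)) \<longleftrightarrow> odd (card (a \<inter> x)) \<noteq> odd (card (b \<inter> x))"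
proof -
  let ?A = "a \<inter> x" and ?B = "b \<inter> x"
  have fin: "finite ?A" "finite ?B" using assms by auto
  have "card (?A \<union> ?B) = card (sym_diff ?A ?B \<union> (?A \<inter> ?B))"
    by (rule arg_cong[where f = card]) blast
  also have "\<dots> = card (sym_diff ?A ?B) + card (?A \<inter> ?B)"
    using fin by (intro card_Un_disjoint) auto
  also have "sym_diff ?A ?B = sym_diff a b \<inter> x" by blast
  finally have "card (sym_diff a b \<inter> x) + 2 * card (?A \<inter> ?B) = card ?A + card ?B"
    using card_Un_Int[OF fin] by simp
  then show ?thesis by presburger
qed

lemma odd_card_Int_sym_diff_iff:
  "finite x \<Longrightarrow> odd (card (x \<inter> sym_diff a b)) \<longleftrightarrow> odd (card (x \<inter> a)) \<noteq> odd (card (x \<inter> b))"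
  using odd_card_sym_diff_Int_iff[of x a b] by (simp only: Int_commute)

lemma sum_eq_0_if_sign_involution:
  fixes f :: "'a \<Rightarrow> int"
  assumes "\<And>x. x \<in> A \<Longrightarrow> s x \<in> A" "\<And>x. x \<in> A \<Longrightarrow> s (s x) = x"
    and "\<And>x. x \<in> A \<Longrightarrow> f (s x) = - f x"
  shows "sum f A = 0"
proof -
  have "bij_betw s A A" by (rule bij_betw_byWitness[where f' = s]) (use assms in auto)
  then have "sum f A = (\<Sum>x\<in>A. f (s x))" by (simp add: sum.reindex_bij_betw)
  also have "\<dots> = - sum f A" using assms(3) by (simp add: sum_negf)
  finally show ?thesis by simp
qed

lemma sum_parity_sign_Pow_eq_0:
  assumes U: "finite U" and w: "w \<subseteq> U" "w \<noteq> {}"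
  shows "(\<Sum>x\<in>Pow U. (-1::int) ^ card (w \<inter> x)) = 0"
proof -
  obtain i where i: "i \<in> w" using w by blast
  have "finite w" using U w finite_subset by blast
  have "odd (card (w \<inter> sym_diff x {i})) \<longleftrightarrow> \<not> odd (card (w \<inter> x))" for x
    using odd_card_Int_sym_diff_iff[OF \<open>finite w\<close>, of x "{i}"] i by simp
  then show ?thesis
    by (intro sum_eq_0_if_sign_involution[where s = "\<lambda>x. sym_diff x {i}"])
      (use i w in \<open>auto simp: minus_one_power_iff\<close>)
qed

lemma sum_parity_sign_subspace_eq_0:
  assumes x: "finite x" and W: "\<And>a b. a \<in> W \<Longrightarrow> b \<in> W \<Longrightarrow> sym_diff a b \<in> W"
    and w0: "w0 \<in> W" "odd (card (w0 \<inter> x))"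
  shows "(\<Sum>w\<in>W. (-1::int) ^ card (w \<inter> x)) = 0"
proof -
  have "odd (card (sym_diff w w0 \<inter> x)) \<longleftrightarrow> \<not> odd (card (w \<inter> x))" for w
    using odd_card_sym_diff_Int_iff[OF x, of w w0] w0(2) by simp
  then show ?thesis
    by (intro sum_eq_0_if_sign_involution[where s = "\<lambda>w. sym_diff w w0"])
      (use W w0(1) in \<open>auto simp: minus_one_power_iff Diff_Diff_Int Un_Diff\<close>)
qed

text \<open>Double counting of \<open>\<Sum>x \<in> Pow U. \<Sum>w \<in> W. (-1) ^ card (w \<inter> x)\<close>: the inner sums over x
  vanish unless \<open>w = {}\<close>, the inner sums over w vanish unless \<open>x \<in> parity_perp U W\<close>.\<close>

lemma card_mult_card_parity_perp:
  assumes U: "finite U" and W: "W \<subseteq> Pow U" "{} \<in> W"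
    and closed: "\<And>a b. a \<in> W \<Longrightarrow> b \<in> W \<Longrightarrow> sym_diff a b \<in> W"
  shows "card W * card (parity_perp U W) = 2 ^ card U"
proof -
  have "finite W" using W U by (meson finite_Pow_iff finite_subset)
  have "(\<Sum>w\<in>W. \<Sum>x\<in>Pow U. (-1::int) ^ card (w \<inter> x)) = (\<Sum>w\<in>W. if w = {} then 2 ^ card U else 0)"
    using sum_parity_sign_Pow_eq_0[OF U] W(1) U by (intro sum.cong) (auto simp: card_Pow)
  also have "\<dots> = 2 ^ card U" using W(2) \<open>finite W\<close> by (simp add: sum.delta)
  finally have by_w: "(\<Sum>x\<in>Pow U. \<Sum>w\<in>W. (-1::int) ^ card (w \<inter> x)) = 2 ^ card U"
    by (simp add: sum.swap[of _ W])
  have "(\<Sum>x\<in>Pow U. \<Sum>w\<in>W. (-1::int) ^ card (w \<inter> x))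
      = (\<Sum>x\<in>Pow U. if \<forall>w\<in>W. even (card (w \<inter> x)) then int (card W) else 0)"
  proof (intro sum.cong refl)
    fix x assume x: "x \<in> Pow U"
    show "(\<Sum>w\<in>W. (-1::int) ^ card (w \<inter> x))
        = (if \<forall>w\<in>W. even (card (w \<inter> x)) then int (card W) else 0)"
    proof (cases "\<forall>w\<in>W. even (card (w \<inter> x))")
      case False
      then obtain w0 where w0: "w0 \<in> W" "odd (card (w0 \<inter> x))" by auto
      have "finite x" using x U finite_subset by auto
      from sum_parity_sign_subspace_eq_0[OF this closed w0] False show ?thesis
        by (subst if_not_P) auto
    qed simp
  qed
  also have "\<dots> = int (card W) * int (card (parity_perp U W))"
    unfolding parity_perp_def using U by (simp add: sum.inter_filter[symmetric])
  finally have "int (card W * card (parity_perp U W)) = int (2 ^ card U)" using by_w by simp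
  then show ?thesis by (simp only: of_nat_eq_iff)
qed

text \<open>All of C lies in one coset of \<open>parity_perp U Q\<close>, whose annihilator contains Q.\<close>

lemma card_mult_card_le_if_constant_parity:
  assumes U: "finite U" and Q: "Q \<subseteq> Pow U" and C: "C \<subseteq> Pow U"
    and const: "\<And>c c' q. c \<in> C \<Longrightarrow> c' \<in> C \<Longrightarrow> q \<in> Q \<Longrightarrow> odd (card (c \<inter> q)) = odd (card (c' \<inter> q))"
  shows "card C * card Q \<le> 2 ^ card U"
proof (cases "C = {}")
  case False
  then obtain c0 where c0: "c0 \<in> C" by blast
  define W where "W = parity_perp U Q"
  have fin_q: "finite q" if "q \<in> Q" for q using that Q U finite_subset by blast
  have W_Pow: "W \<subseteq> Pow U" unfolding W_def parity_perp_def by auto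
  have closed: "sym_diff a b \<in> W" if "a \<in> W" "b \<in> W" for a b
  proof -
    have "even (card (q \<inter> sym_diff a b))" if "q \<in> Q" for q
      using odd_card_Int_sym_diff_iff[OF fin_q[OF that], of a b] \<open>a \<in> W\<close> \<open>b \<in> W\<close> that
      unfolding W_def parity_perp_def by simp
    then show ?thesis using that unfolding W_def parity_perp_def by auto
  qed
  have "inj_on (\<lambda>c. sym_diff c c0) C"
    by (rule inj_on_inverseI[where g = "\<lambda>c. sym_diff c c0"]) auto
  moreover have "(\<lambda>c. sym_diff c c0) ` C \<subseteq> W"
  proof
    fix y assume "y \<in> (\<lambda>c. sym_diff c c0) ` C"
    then obtain c where c: "c \<in> C" "y = sym_diff c c0" by blast
    have "even (card (q \<inter> y))" if "q \<in> Q" for q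
      using odd_card_sym_diff_Int_iff[OF fin_q[OF that], of c c0] const[OF c(1) c0 that] c(2)
      by (simp add: Int_commute)
    then show "y \<in> W" using c C c0 unfolding W_def parity_perp_def by auto
  qed
  ultimately have "card C \<le> card W"
    using card_inj_on_le W_Pow U by (metis finite_Pow_iff finite_subset)
  moreover have "card Q \<le> card (parity_perp U W)"
    using Q U by (intro card_mono) (auto simp: parity_perp_def W_def Int_commute)
  ultimately have "card C * card Q \<le> card W * card (parity_perp U W)" by (rule mult_le_mono)
  also have "\<dots> = 2 ^ card U"
    by (rule card_mult_card_parity_perp[OF U W_Pow _ closed]) (auto simp: W_def parity_perp_def)
  finally show ?thesis .
qed simp

lemma card_odd_parity_Pow:
  assumes U: "finite U" and c: "c \<subseteq> U" "c \<noteq> {}"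
  shows "card {d \<in> Pow U. odd (card (c \<inter> d))} = 2 ^ (card U - 1)"
proof -
  define Od where "Od = {d \<in> Pow U. odd (card (c \<inter> d))}"
  define Ev where "Ev = {d \<in> Pow U. even (card (c \<inter> d))}"
  have fin: "finite Od" "finite Ev" and disj: "Od \<inter> Ev = {}" and un: "Od \<union> Ev = Pow U"
    using U unfolding Od_def Ev_def by auto
  have "(\<Sum>x\<in>Od. (-1::int) ^ card (c \<inter> x)) = - int (card Od)" unfolding Od_def by simp
  moreover have "(\<Sum>x\<in>Ev. (-1::int) ^ card (c \<inter> x)) = int (card Ev)" unfolding Ev_def by simp
  moreover have "(\<Sum>x\<in>Od. (-1::int) ^ card (c \<inter> x)) + (\<Sum>x\<in>Ev. (-1::int) ^ card (c \<inter> x)) = 0"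
    using sum.union_disjoint[OF fin disj, of "\<lambda>x. (-1::int) ^ card (c \<inter> x)"]
      sum_parity_sign_Pow_eq_0[OF U c] un by simp
  ultimately have "card Od = card Ev" by simp
  moreover have "card Od + card Ev = 2 ^ card U"
    using card_Un_disjoint[OF fin disj] U by (simp add: un card_Pow)
  moreover obtain m where "card U = Suc m"
    using U c by (metis card_0_eq not0_implies_Suc subset_empty)
  ultimately show ?thesis unfolding Od_def by simp
qed

definition labels :: "nat \<Rightarrow> nat set set" where
  "labels t = Pow {0..<t} - {{}}"

lemma finite_labels: "finite (labels t)"
  unfolding labels_def by simp

lemma labels_subset_Pow: "labels t \<subseteq> Pow {0..<t}"
  unfolding labels_def by blast

lemma card_labels: "card (labels t) = 2 ^ t - 1"
  unfolding labels_def by (simp add: card_Pow)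

lemma card_labels_parity_ge:
  assumes "c \<in> labels t"
  shows "2 ^ (t - 1) - 1 \<le> card {d \<in> labels t. odd (card (c \<inter> d)) = p}"
proof -
  let ?Odd = "{d \<in> Pow {0..<t}. odd (card (c \<inter> d))}"
  have c: "c \<subseteq> {0..<t}" "c \<noteq> {}" using assms unfolding labels_def by auto
  then obtain t' where t: "t = Suc t'" by (metis atLeastLessThan0 not0_implies_Suc subset_empty)
  have odd: "card ?Odd = 2 ^ t'"
    using card_odd_parity_Pow[OF _ c] t by simp
  show ?thesis
  proof (cases p)
    case True
    then have "{d \<in> labels t. odd (card (c \<inter> d)) = p} = ?Odd"
      unfolding labels_def by auto
    then show ?thesis using odd t by simp
  next
    case False
    then have "{d \<in> labels t. odd (card (c \<inter> d)) = p} = (Pow {0..<t} - ?Odd) - {{}}"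
      unfolding labels_def by auto
    moreover have "card (Pow {0..<t} - ?Odd) = 2 ^ t'"
      using odd t by (subst card_Diff_subset) (auto simp: card_Pow)
    moreover have "{} \<in> Pow {0..<t} - ?Odd" by simp
    ultimately show ?thesis using t by (simp add: card_Diff_singleton)
  qed
qed

section \<open>Tail bounds for uniformly random functions\<close>

text \<open>Counting versions of Chernoff's bound: the number of \<open>g \<in> PiE I B\<close> hitting S at few (many)
  places is bounded via the generating function \<open>\<Sum>g. r ^ card {i. S i (g i)}\<close> with \<open>r \<le> 1\<close>
  (\<open>r \<ge> 1\<close>), which factorises over I.\<close>

lemma sum_power_card_PiE:
  fixes r :: real
  assumes "finite I" and "\<And>i. i \<in> I \<Longrightarrow> finite (B i)"
  shows "(\<Sum>g\<in>PiE I B. r ^ card {i\<in>I. S i (g i)}) = (\<Prod>i\<in>I. \<Sum>b\<in>B i. if S i b then r else 1)"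
proof -
  have "r ^ card {i\<in>I. S i (g i)} = (\<Prod>i\<in>I. if S i (g i) then r else 1)" for g
    using prod.inter_filter[OF assms(1), of "\<lambda>_. r" "\<lambda>i. S i (g i)"] by simp
  then show ?thesis by (simp add: prod_sum_PiE[OF assms])
qed

lemma card_PiE_few_hits_le:
  fixes r :: real
  assumes "finite I" and "\<And>i. i \<in> I \<Longrightarrow> finite (B i)" and "0 < r" "r \<le> 1"
  shows "real (card {g\<in>PiE I B. card {i\<in>I. S i (g i)} < K}) * r ^ K
           \<le> (\<Prod>i\<in>I. \<Sum>b\<in>B i. if S i b then r else 1)"
proof -
  let ?G = "{g\<in>PiE I B. card {i\<in>I. S i (g i)} < K}"
  have "finite (PiE I B)" using assms(1,2) by (simp add: finite_PiE)
  have "real (card ?G) * r ^ K = (\<Sum>g\<in>?G. r ^ K)" by simp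
  also have "\<dots> \<le> (\<Sum>g\<in>?G. r ^ card {i\<in>I. S i (g i)})"
    by (rule sum_mono) (use assms(3,4) in \<open>auto intro!: power_decreasing\<close>)
  also have "\<dots> \<le> (\<Sum>g\<in>PiE I B. r ^ card {i\<in>I. S i (g i)})"
    by (rule sum_mono2[OF \<open>finite (PiE I B)\<close>]) (use assms(3) in auto)
  also have "\<dots> = (\<Prod>i\<in>I. \<Sum>b\<in>B i. if S i b then r else 1)"
    by (rule sum_power_card_PiE[OF assms(1,2)])
  finally show ?thesis .
qed

lemma card_PiE_many_hits_le:
  fixes r :: real
  assumes "finite I" and "\<And>i. i \<in> I \<Longrightarrow> finite (B i)" and "1 \<le> r"
  shows "real (card {g\<in>PiE I B. K < card {i\<in>I. S i (g i)}}) * r ^ (K + 1)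
           \<le> (\<Prod>i\<in>I. \<Sum>b\<in>B i. if S i b then r else 1)"
proof -
  let ?G = "{g\<in>PiE I B. K < card {i\<in>I. S i (g i)}}"
  have "finite (PiE I B)" using assms(1,2) by (simp add: finite_PiE)
  have "real (card ?G) * r ^ (K + 1) = (\<Sum>g\<in>?G. r ^ (K + 1))" by simp
  also have "\<dots> \<le> (\<Sum>g\<in>?G. r ^ card {i\<in>I. S i (g i)})"
  proof (rule sum_mono)
    fix g assume "g \<in> ?G"
    then have "K + 1 \<le> card {i\<in>I. S i (g i)}" by simp
    then show "r ^ (K + 1) \<le> r ^ card {i\<in>I. S i (g i)}" using assms(3) by (rule power_increasing)
  qed
  also have "\<dots> \<le> (\<Sum>g\<in>PiE I B. r ^ card {i\<in>I. S i (g i)})"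
    by (rule sum_mono2[OF \<open>finite (PiE I B)\<close>]) (use assms(3) in auto)
  also have "\<dots> = (\<Prod>i\<in>I. \<Sum>b\<in>B i. if S i b then r else 1)"
    by (rule sum_power_card_PiE[OF assms(1,2)])
  finally show ?thesis .
qed

lemma sum_if_eq_card_minus:
  fixes r :: real
  assumes "finite A"
  shows "(\<Sum>b\<in>A. if P b then r else 1) = real (card A) - (1 - r) * real (card {b\<in>A. P b})"
proof -
  have "(\<Sum>b\<in>A. if P b then r else 1) = (\<Sum>b\<in>A. 1 - (1 - r) * (if P b then 1 else 0))"
    by (rule sum.cong) auto
  also have "\<dots> = real (card A) - (1 - r) * (\<Sum>b\<in>A. if P b then 1 else 0)"
    by (simp add: sum_subtractf sum_distrib_left)
  also have "(\<Sum>b\<in>A. if P b then 1 else (0::real)) = real (card {b\<in>A. P b})"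
    using assms by (simp add: sum.If_cases Int_def)
  finally show ?thesis .
qed

lemma card_PiE_fixed_point_few_hits_le:
  fixes r :: real
  assumes V: "finite V" "u \<in> V" and L: "finite L" and r: "0 < r" "r \<le> 1"
    and not_self: "\<not> S u c" and many: "\<And>w. w \<in> V \<Longrightarrow> w \<noteq> u \<Longrightarrow> h \<le> card {d\<in>L. S w d}"
  shows "real (card {g\<in>PiE V (\<lambda>v. if v = u then {c} else L). card {w\<in>V. S w (g w)} < K}) * r ^ K
           \<le> (real (card L) - (1 - r) * real h) ^ (card V - 1)"
proof -
  define B where "B v = (if v = u then {c} else L)" for v
  have "real (card {g\<in>PiE V B. card {w\<in>V. S w (g w)} < K}) * r ^ K
      \<le> (\<Prod>w\<in>V. \<Sum>d\<in>B w. if S w d then r else 1)"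
    by (rule card_PiE_few_hits_le[OF V(1) _ r]) (use L in \<open>simp add: B_def\<close>)
  also have "\<dots> = (\<Sum>d\<in>B u. if S u d then r else 1) * (\<Prod>w\<in>V - {u}. \<Sum>d\<in>B w. if S w d then r else 1)"
    by (rule prod.remove[OF V])
  also have "\<dots> = (\<Prod>w\<in>V - {u}. \<Sum>d\<in>B w. if S w d then r else 1)"
    using not_self by (simp add: B_def[of u])
  also have "\<dots> \<le> (\<Prod>w\<in>V - {u}. real (card L) - (1 - r) * real h)"
  proof (rule prod_mono)
    fix w assume w: "w \<in> V - {u}"
    have "card {d\<in>L. S w d} \<le> card L" using L by (simp add: card_mono)
    moreover have "(1 - r) * real (card {d\<in>L. S w d}) \<le> real (card {d\<in>L. S w d})"
      using r by (intro mult_left_le_one_le) auto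
    moreover have "(1 - r) * real h \<le> (1 - r) * real (card {d\<in>L. S w d})"
      using many[of w] w r by (intro mult_left_mono) auto
    ultimately show "0 \<le> (\<Sum>d\<in>B w. if S w d then r else 1) \<and>
        (\<Sum>d\<in>B w. if S w d then r else 1) \<le> real (card L) - (1 - r) * real h"
      using w sum_if_eq_card_minus[OF L] unfolding B_def by auto
  qed
  also have "\<dots> = (real (card L) - (1 - r) * real h) ^ (card V - 1)" using V by simp
  finally show ?thesis unfolding B_def .
qed

text \<open>The hits of \<open>g\<close> are measured relative to the value of \<open>g\<close> at a fixed point u, so we first
  fix \<open>g u = c\<close> and then sum over c.\<close>

lemma card_PiE_few_relative_hits_le:
  fixes r :: real
  assumes V: "finite V" "u \<in> V" and L: "finite L" and r: "0 < r" "r \<le> 1"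
    and not_self: "\<And>c. c \<in> L \<Longrightarrow> \<not> S c u c"
    and many: "\<And>c w. c \<in> L \<Longrightarrow> w \<in> V \<Longrightarrow> w \<noteq> u \<Longrightarrow> h \<le> card {d\<in>L. S c w d}"
  shows "real (card {g\<in>PiE V (\<lambda>_. L). card {w\<in>V. S (g u) w (g w)} < K}) * r ^ K
           \<le> real (card L) * (real (card L) - (1 - r) * real h) ^ (card V - 1)"
proof -
  define F where "F c = {g\<in>PiE V (\<lambda>v. if v = u then {c} else L). card {w\<in>V. S c w (g w)} < K}" for c
  have fin_F: "finite (F c)" for c
    using V(1) L unfolding F_def by (simp add: finite_PiE)
  have "{g\<in>PiE V (\<lambda>_. L). card {w\<in>V. S (g u) w (g w)} < K} \<subseteq> (\<Union>c\<in>L. F c)"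
  proof
    fix g assume g: "g \<in> {g\<in>PiE V (\<lambda>_. L). card {w\<in>V. S (g u) w (g w)} < K}"
    then have "g u \<in> L" "g \<in> PiE V (\<lambda>v. if v = u then {g u} else L)" using V(2) by (auto simp: PiE_iff)
    then show "g \<in> (\<Union>c\<in>L. F c)" using g unfolding F_def by blast
  qed
  then have "card {g\<in>PiE V (\<lambda>_. L). card {w\<in>V. S (g u) w (g w)} < K} \<le> (\<Sum>c\<in>L. card (F c))"
    using card_mono card_UN_le[OF L, of F] fin_F L by (meson finite_UN_I le_trans)
  then have "real (card {g\<in>PiE V (\<lambda>_. L). card {w\<in>V. S (g u) w (g w)} < K}) * r ^ K
      \<le> (\<Sum>c\<in>L. real (card (F c))) * r ^ K"
    using r by (intro mult_right_mono) (simp_all flip: of_nat_sum)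
  also have "\<dots> = (\<Sum>c\<in>L. real (card (F c)) * r ^ K)" by (rule sum_distrib_right)
  also have "\<dots> \<le> (\<Sum>c\<in>L. (real (card L) - (1 - r) * real h) ^ (card V - 1))"
    unfolding F_def using card_PiE_fixed_point_few_hits_le[OF V L r] not_self many by (intro sum_mono) blast
  finally show ?thesis by simp
qed

section \<open>Inverting along random labels\<close>

text \<open>An arc is reversed iff its end labels share an odd number of indices.\<close>

definition parity_arc :: "('a \<times> 'a) set \<Rightarrow> 'a \<Rightarrow> 'a \<Rightarrow> nat set \<Rightarrow> nat set \<Rightarrow> bool" where
  "parity_arc T x y c d \<longleftrightarrow> (if odd (card (c \<inter> d)) then (y, x) \<in> T else (x, y) \<in> T)"

definition label_inversions :: "'a set \<Rightarrow> ('a \<Rightarrow> nat set) \<Rightarrow> nat \<Rightarrow> 'a set list" where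
  "label_inversions V l t = map (\<lambda>i. {w \<in> V. i \<in> l w}) [0..<t]"

definition low_out_degree_labellings ::
    "('a \<times> 'a) set \<Rightarrow> 'a set \<Rightarrow> nat \<Rightarrow> nat \<Rightarrow> 'a \<Rightarrow> ('a \<Rightarrow> nat set) set" where
  "low_out_degree_labellings T V t K u =
     {l \<in> PiE V (\<lambda>_. labels t). card {w \<in> V. parity_arc T u w (l u) (l w)} < K}"

definition large_class_labellings :: "'a set \<Rightarrow> nat \<Rightarrow> nat \<Rightarrow> nat set \<Rightarrow> ('a \<Rightarrow> nat set) set" where
  "large_class_labellings V t b c = {l \<in> PiE V (\<lambda>_. labels t). b < card {v \<in> V. l v = c}}"

text \<open>Without the bound b on the label classes inside Q such labellings need not be rare: Q could
  carry a single label.\<close>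

definition no_cross_arc_labellings ::
    "('a \<times> 'a) set \<Rightarrow> 'a set \<Rightarrow> nat \<Rightarrow> nat \<Rightarrow> 'a set \<Rightarrow> 'a set \<Rightarrow> ('a \<Rightarrow> nat set) set" where
  "no_cross_arc_labellings T V t b P Q =
     {l \<in> PiE V (\<lambda>_. labels t). (\<forall>c. card {v \<in> Q. l v = c} \<le> b) \<and>
        (\<forall>a\<in>P. \<forall>y\<in>Q. \<not> parity_arc T a y (l a) (l y))}"

definition good_labelling :: "('a \<times> 'a) set \<Rightarrow> 'a set \<Rightarrow> nat \<Rightarrow> nat \<Rightarrow> ('a \<Rightarrow> nat set) \<Rightarrow> bool" where
  "good_labelling T V K s l \<longleftrightarrow>
     (\<forall>u\<in>V. K \<le> card {w \<in> V. parity_arc T u w (l u) (l w)} \<and>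
             K \<le> card {w \<in> V. parity_arc T w u (l w) (l u)}) \<and>
     (\<forall>P Q. P \<subseteq> V \<longrightarrow> Q \<subseteq> V \<longrightarrow> P \<inter> Q = {} \<longrightarrow> card P = s \<longrightarrow> card Q = s \<longrightarrow>
        (\<exists>a\<in>P. \<exists>y\<in>Q. parity_arc T a y (l a) (l y)))"

lemma mem_invert_seq_label_inversions_iff:
  assumes "\<forall>v\<in>V. l v \<subseteq> {0..<t}" and "u \<in> V" "v \<in> V"
  shows "(u, v) \<in> invert_seq (label_inversions V l t) T \<longleftrightarrow> parity_arc T u v (l u) (l v)"
proof -
  have "length (filter (\<lambda>X. u \<in> X \<and> v \<in> X) (label_inversions V l t))
      = length (filter (\<lambda>i. i \<in> l u \<and> i \<in> l v) [0..<t])"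
    using assms(2,3) by (simp add: label_inversions_def filter_map comp_def)
  also have "\<dots> = card ({i. i \<in> l u \<and> i \<in> l v} \<inter> set [0..<t])"
    by (rule distinct_length_filter) simp
  also have "{i. i \<in> l u \<and> i \<in> l v} \<inter> set [0..<t] = l u \<inter> l v" using assms by auto
  finally show ?thesis unfolding mem_invert_seq_iff parity_arc_def by simp
qed

lemma parity_arc_converse: "parity_arc (T\<inverse>) x y c d \<longleftrightarrow> parity_arc T y x d c"
  by (simp add: parity_arc_def Int_commute)

lemma not_parity_arc_iff:
  assumes "tournament V T" "x \<in> V" "y \<in> V" "x \<noteq> y"
  shows "\<not> parity_arc T x y c d \<longleftrightarrow> (odd (card (c \<inter> d)) \<longleftrightarrow> (x, y) \<in> T)"
  using tournament_flip_iff[OF assms] unfolding parity_arc_def by auto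

lemma card_parity_arc_labels_ge:
  assumes "tournament V T" "u \<in> V" "w \<in> V" "u \<noteq> w" "c \<in> labels t"
  shows "2 ^ (t - 1) - 1 \<le> card {d \<in> labels t. parity_arc T u w c d}"
proof -
  have "{d \<in> labels t. parity_arc T u w c d} = {d \<in> labels t. odd (card (c \<inter> d)) = ((w, u) \<in> T)}"
    using not_parity_arc_iff[OF assms(1-4)] tournament_flip_iff[OF assms(1-4)] by blast
  then show ?thesis using card_labels_parity_ge[OF assms(5)] by simp
qed

lemma card_low_out_degree_labellings_le:
  fixes r :: real
  assumes V: "finite V" "u \<in> V" and T: "tournament V T" and r: "0 < r" "r \<le> 1"
  shows "real (card (low_out_degree_labellings T V t K u)) * r ^ K
           \<le> real (2 ^ t - 1) * (real (2 ^ t - 1) - (1 - r) * real (2 ^ (t - 1) - 1)) ^ (card V - 1)"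
  using card_PiE_few_relative_hits_le[OF V finite_labels r,
      where h = "2 ^ (t - 1) - 1" and S = "\<lambda>c w d. parity_arc T u w c d" and K = K]
    card_parity_arc_labels_ge[OF T V(2)] tournament_irrefl[OF T]
  by (simp add: card_labels parity_arc_def low_out_degree_labellings_def)

lemma card_large_class_labellings_le:
  assumes "finite V" "c \<in> labels t"
  shows "real (card (large_class_labellings V t b c)) * 2 ^ (b + 1) \<le> (real (2 ^ t - 1) + 1) ^ card V"
proof -
  have "{d \<in> labels t. d = c} = {c}" using assms(2) by auto
  then have "(\<Sum>d\<in>labels t. if d = c then (2::real) else 1) = real (2 ^ t - 1) + 1"
    using sum_if_eq_card_minus[OF finite_labels, of "\<lambda>d. d = c" 2] by (simp add: card_labels)
  then show ?thesis
    using card_PiE_many_hits_le[OF assms(1), where B = "\<lambda>_. labels t" and r = 2 and K = b and S = "\<lambda>_ d. d = c"]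
    by (simp add: large_class_labellings_def finite_labels)
qed

lemma card_le_card_image_mult:
  assumes "finite Q" and "\<And>c. card {v \<in> Q. f v = c} \<le> b"
  shows "card Q \<le> card (f ` Q) * b"
proof -
  have "card Q = card (\<Union>c\<in>f ` Q. {v \<in> Q. f v = c})" by (rule arg_cong[where f = card]) blast
  also have "\<dots> \<le> (\<Sum>c\<in>f ` Q. card {v \<in> Q. f v = c})" using assms(1) by (intro card_UN_le) simp
  also have "\<dots> \<le> card (f ` Q) * b" using sum_mono[of "f ` Q", OF assms(2)] by simp
  finally show ?thesis .
qed

text \<open>With the labels on Q fixed, the labels c of a vertex a without arcs into Q solve the linear
  system \<open>odd (card (c \<inter> l y)) \<longleftrightarrow> (a, y) \<in> T\<close> (\<open>y \<in> Q\<close>), whose rank grows with the number of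
  distinct labels on Q.\<close>

lemma card_labels_without_arcs_into_le:
  assumes T: "tournament V T" and a: "a \<in> V" "a \<notin> Q" and Q: "Q \<subseteq> V" "finite Q"
    and l: "\<And>y. y \<in> Q \<Longrightarrow> l y \<in> labels t" and classes: "\<And>c. card {v \<in> Q. l v = c} \<le> b"
  shows "card {c \<in> labels t. \<forall>y\<in>Q. \<not> parity_arc T a y c (l y)} * card Q \<le> 2 ^ t * b"
proof -
  let ?Sol = "{c \<in> labels t. \<forall>y\<in>Q. \<not> parity_arc T a y c (l y)}"
  have const: "odd (card (c \<inter> q)) = odd (card (c' \<inter> q))"
    if "c \<in> ?Sol" "c' \<in> ?Sol" "q \<in> l ` Q" for c c' q
  proof -
    obtain y where y: "y \<in> Q" "q = l y" using \<open>q \<in> l ` Q\<close> by blast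
    have "y \<in> V" "a \<noteq> y" using y Q a by auto
    have "\<not> parity_arc T a y c (l y)" "\<not> parity_arc T a y c' (l y)" using that(1,2) y(1) by auto
    then show ?thesis
      using not_parity_arc_iff[OF T \<open>a \<in> V\<close> \<open>y \<in> V\<close> \<open>a \<noteq> y\<close>] y(2) by blast
  qed
  have "l ` Q \<subseteq> Pow {0..<t}" "?Sol \<subseteq> Pow {0..<t}"
    using l labels_subset_Pow by blast+
  from card_mult_card_le_if_constant_parity[OF _ this const]
  have rank: "card ?Sol * card (l ` Q) \<le> 2 ^ t" by simp
  have "card ?Sol * card Q \<le> card ?Sol * (card (l ` Q) * b)"
    using card_le_card_image_mult[OF Q(2) classes] by simp
  also have "\<dots> = card ?Sol * card (l ` Q) * b" by (simp only: mult.assoc)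
  also have "\<dots> \<le> 2 ^ t * b" using rank by simp
  finally show ?thesis .
qed

lemma inj_on_restrict_pair:
  assumes "P \<subseteq> V"
  shows "inj_on (\<lambda>l. (restrict l (V - P), restrict l P)) (PiE V B)"
proof (rule inj_onI)
  fix l l' assume l: "l \<in> PiE V B" and l': "l' \<in> PiE V B"
    and "(restrict l (V - P), restrict l P) = (restrict l' (V - P), restrict l' P)"
  then have eq: "restrict l (V - P) = restrict l' (V - P)" "restrict l P = restrict l' P" by simp_all
  have "l v = l' v" for v
  proof (cases "v \<in> V")
    case True
    then have "v \<in> V - P \<or> v \<in> P" by blast
    then show ?thesis using fun_cong[OF eq(1), of v] fun_cong[OF eq(2), of v] by auto
  next
    case False
    then show ?thesis using l l' by (simp add: PiE_def extensional_def)
  qed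
  then show "l = l'" by blast
qed

lemma card_le_sum_prod_extensions:
  assumes V: "finite V" "P \<subseteq> V" and G: "finite G" and C: "\<And>g a. finite (C g a)"
    and A: "A \<subseteq> PiE V B" and restr: "\<And>l. l \<in> A \<Longrightarrow> restrict l (V - P) \<in> G"
    and ext: "\<And>l a. l \<in> A \<Longrightarrow> a \<in> P \<Longrightarrow> l a \<in> C (restrict l (V - P)) a"
  shows "card A \<le> (\<Sum>g\<in>G. \<Prod>a\<in>P. card (C g a))"
proof -
  have "finite P" using V finite_subset by blast
  have "inj_on (\<lambda>l. (restrict l (V - P), restrict l P)) A"
    using inj_on_restrict_pair[OF V(2)] A by (rule inj_on_subset)
  moreover have "(\<lambda>l. (restrict l (V - P), restrict l P)) ` A \<subseteq> (SIGMA g:G. PiE P (C g))"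
    using restr ext by (auto simp: PiE_iff)
  moreover have "finite (SIGMA g:G. PiE P (C g))" using G C \<open>finite P\<close> by (simp add: finite_PiE)
  ultimately have "card A \<le> card (SIGMA g:G. PiE P (C g))" by (rule card_inj_on_le)
  also have "\<dots> = (\<Sum>g\<in>G. \<Prod>a\<in>P. card (C g a))"
    using G C \<open>finite P\<close> by (simp add: card_PiE finite_PiE)
  finally show ?thesis .
qed

lemma card_no_cross_arc_labellings_le:
  assumes V: "finite V" and T: "tournament V T"
    and PQ: "P \<subseteq> V" "Q \<subseteq> V" "P \<inter> Q = {}" "card P = s" "card Q = s"
  shows "card (no_cross_arc_labellings T V t b P Q) * s ^ s \<le> (2 ^ t - 1) ^ (card V - s) * (2 ^ t * b) ^ s"
proof -
  let ?L = "labels t"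
  define G where "G = {g \<in> PiE (V - P) (\<lambda>_. ?L). \<forall>c. card {v \<in> Q. g v = c} \<le> b}"
  define Sol where "Sol g a = {c \<in> ?L. \<forall>y\<in>Q. \<not> parity_arc T a y c (g y)}" for g a
  have fin: "finite P" "finite Q" "finite G"
    using PQ V finite_subset finite_labels unfolding G_def by (auto simp: finite_PiE)
  have Q_outside: "Q \<subseteq> V - P" using PQ by blast
  have "card (no_cross_arc_labellings T V t b P Q) \<le> (\<Sum>g\<in>G. \<Prod>a\<in>P. card (Sol g a))"
  proof (rule card_le_sum_prod_extensions[OF V PQ(1) fin(3)])
    show "finite (Sol g a)" for g a unfolding Sol_def using finite_labels by simp
    fix l assume l: "l \<in> no_cross_arc_labellings T V t b P Q"
    then have "{v \<in> Q. restrict l (V - P) v = c} = {v \<in> Q. l v = c}" for c using Q_outside by auto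
    then show "restrict l (V - P) \<in> G"
      using l unfolding G_def no_cross_arc_labellings_def by (auto simp: PiE_iff)
    show "l a \<in> Sol (restrict l (V - P)) a" if "a \<in> P" for a
      using l that Q_outside PQ(1) unfolding Sol_def no_cross_arc_labellings_def by (auto simp: PiE_iff)
  qed (auto simp: no_cross_arc_labellings_def)
  then have "card (no_cross_arc_labellings T V t b P Q) * s ^ s \<le> (\<Sum>g\<in>G. \<Prod>a\<in>P. card (Sol g a)) * s ^ s"
    by (rule mult_le_mono1)
  also have "\<dots> = (\<Sum>g\<in>G. \<Prod>a\<in>P. card (Sol g a) * s)"
    using PQ(4) by (simp add: sum_distrib_right prod.distrib)
  also have "\<dots> \<le> (\<Sum>g\<in>G. \<Prod>a\<in>P. 2 ^ t * b)"
  proof (intro sum_mono prod_mono conjI)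
    fix g a assume g: "g \<in> G" and a: "a \<in> P"
    have "a \<in> V" "a \<notin> Q" using a PQ by auto
    moreover have "g y \<in> ?L" if "y \<in> Q" for y using g that Q_outside unfolding G_def by (auto simp: PiE_iff)
    moreover have "card {v \<in> Q. g v = c} \<le> b" for c using g unfolding G_def by auto
    ultimately show "card (Sol g a) * s \<le> 2 ^ t * b"
      unfolding Sol_def PQ(5)[symmetric] by (rule card_labels_without_arcs_into_le[OF T _ _ PQ(2) fin(2)])
  qed simp
  also have "\<dots> = card G * (2 ^ t * b) ^ s" using PQ(4) by simp
  also have "card G \<le> (2 ^ t - 1) ^ (card V - s)"
  proof -
    have "card G \<le> card (PiE (V - P) (\<lambda>_. ?L))"
      unfolding G_def using V finite_labels by (intro card_mono) (auto simp: finite_PiE)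
    also have "\<dots> = (2 ^ t - 1) ^ (card V - s)"
      using V PQ fin by (simp add: card_PiE card_Diff_subset card_labels)
    finally show ?thesis .
  qed
  finally show ?thesis by simp
qed

lemma card_UN_le_uniform:
  fixes c :: real
  assumes "finite I" and "\<And>i. i \<in> I \<Longrightarrow> real (card (B i)) \<le> c"
  shows "real (card (\<Union>i\<in>I. B i)) \<le> real (card I) * c"
proof -
  have "real (card (\<Union>i\<in>I. B i)) \<le> (\<Sum>i\<in>I. real (card (B i)))"
    using card_UN_le[OF assms(1), of B] by (simp only: of_nat_le_iff flip: of_nat_sum)
  also have "\<dots> \<le> real (card I) * c" using sum_mono[of I, OF assms(2)] by simp
  finally show ?thesis .
qed

lemma card_disjoint_pairs_le:
  assumes "finite V"
  shows "finite {(P, Q). P \<subseteq> V \<and> Q \<subseteq> V \<and> P \<inter> Q = {} \<and> card P = s \<and> card Q = s}" (is "finite ?PQ")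
    and "card {(P, Q). P \<subseteq> V \<and> Q \<subseteq> V \<and> P \<inter> Q = {} \<and> card P = s \<and> card Q = s} \<le> 4 ^ card V"
proof -
  have sub: "?PQ \<subseteq> Pow V \<times> Pow V" by auto
  moreover have fin: "finite (Pow V \<times> Pow V)" using assms by simp
  ultimately show "finite ?PQ" by (rule finite_subset)
  have "card ?PQ \<le> card (Pow V \<times> Pow V)" using card_mono[OF fin sub] .
  also have "\<dots> = 4 ^ card V"
    using assms by (simp add: card_cartesian_product card_Pow power_mult_distrib[symmetric])
  finally show "card ?PQ \<le> 4 ^ card V" .
qed

lemma card_UN_no_cross_arc_labellings_le:
  assumes V: "finite V" and T: "tournament V T"
  shows "real (card (\<Union>(P, Q) \<in> {(P, Q). P \<subseteq> V \<and> Q \<subseteq> V \<and> P \<inter> Q = {} \<and> card P = s \<and> card Q = s}.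
                       no_cross_arc_labellings T V t b P Q))
         \<le> 4 ^ card V * (real ((2 ^ t - 1) ^ (card V - s) * (2 ^ t * b) ^ s) / real (s ^ s))"
proof -
  let ?PQ = "{(P, Q). P \<subseteq> V \<and> Q \<subseteq> V \<and> P \<inter> Q = {} \<and> card P = s \<and> card Q = s}"
  have "real (card (\<Union>(P, Q) \<in> ?PQ. no_cross_arc_labellings T V t b P Q))
      \<le> real (card ?PQ) * (real ((2 ^ t - 1) ^ (card V - s) * (2 ^ t * b) ^ s) / real (s ^ s))"
  proof (intro card_UN_le_uniform[OF card_disjoint_pairs_le(1)[OF V]])
    fix PQ assume "PQ \<in> ?PQ"
    then obtain P Q where "PQ = (P, Q)" "P \<subseteq> V" "Q \<subseteq> V" "P \<inter> Q = {}" "card P = s" "card Q = s"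
      by blast
    then have "card (case PQ of (P, Q) \<Rightarrow> no_cross_arc_labellings T V t b P Q) * s ^ s
        \<le> (2 ^ t - 1) ^ (card V - s) * (2 ^ t * b) ^ s"
      using card_no_cross_arc_labellings_le[OF V T] by simp
    then have "real (card (case PQ of (P, Q) \<Rightarrow> no_cross_arc_labellings T V t b P Q)) * real (s ^ s)
        \<le> real ((2 ^ t - 1) ^ (card V - s) * (2 ^ t * b) ^ s)"
      by (simp only: of_nat_mult[symmetric] of_nat_le_iff)
    moreover have "0 < real (s ^ s)" by (cases "s = 0") simp_all
    ultimately show "real (card (case PQ of (P, Q) \<Rightarrow> no_cross_arc_labellings T V t b P Q))
        \<le> real ((2 ^ t - 1) ^ (card V - s) * (2 ^ t * b) ^ s) / real (s ^ s)"
      by (subst pos_le_divide_eq)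
  qed
  also have "\<dots> \<le> 4 ^ card V * (real ((2 ^ t - 1) ^ (card V - s) * (2 ^ t * b) ^ s) / real (s ^ s))"
  proof (rule mult_right_mono)
    have "real (card ?PQ) \<le> real (4 ^ card V)"
      using card_disjoint_pairs_le(2)[OF V] by (simp only: of_nat_le_iff)
    then show "real (card ?PQ) \<le> 4 ^ card V" by simp
  qed simp
  finally show ?thesis .
qed

lemma good_labelling_if_not_bad:
  assumes V: "finite V" and l: "l \<in> PiE V (\<lambda>_. labels t)"
    and degrees: "\<And>u. u \<in> V \<Longrightarrow>
      l \<notin> low_out_degree_labellings T V t K u \<and> l \<notin> low_out_degree_labellings (T\<inverse>) V t K u"
    and classes: "\<And>c. c \<in> labels t \<Longrightarrow> l \<notin> large_class_labellings V t b c"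
    and cross: "\<And>P Q. P \<subseteq> V \<Longrightarrow> Q \<subseteq> V \<Longrightarrow> P \<inter> Q = {} \<Longrightarrow> card P = s \<Longrightarrow> card Q = s \<Longrightarrow>
      l \<notin> no_cross_arc_labellings T V t b P Q"
  shows "good_labelling T V K s l"
  unfolding good_labelling_def
proof (intro conjI allI impI ballI)
  fix u assume "u \<in> V"
  then show "K \<le> card {w \<in> V. parity_arc T u w (l u) (l w)}"
    "K \<le> card {w \<in> V. parity_arc T w u (l w) (l u)}"
    using degrees[OF \<open>u \<in> V\<close>] l unfolding low_out_degree_labellings_def
    by (auto simp: parity_arc_converse)
next
  fix P Q assume PQ: "P \<subseteq> V" "Q \<subseteq> V" "P \<inter> Q = {}" "card P = s" "card Q = s"
  have "card {v \<in> Q. l v = c} \<le> b" for c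
  proof (cases "c \<in> labels t")
    case True
    then have "card {v \<in> V. l v = c} \<le> b"
      using classes[OF True] l unfolding large_class_labellings_def by auto
    moreover have "card {v \<in> Q. l v = c} \<le> card {v \<in> V. l v = c}" using PQ V by (intro card_mono) auto
    ultimately show ?thesis by simp
  next
    case False
    then have "{v \<in> Q. l v = c} = {}" using l PQ by (auto simp: PiE_iff)
    then show ?thesis by (metis card.empty zero_le)
  qed
  then show "\<exists>a\<in>P. \<exists>y\<in>Q. parity_arc T a y (l a) (l y)"
    using cross[OF PQ] l unfolding no_cross_arc_labellings_def by auto
qed

text \<open>Union bound: by the three numerical hypotheses, the labellings with a vertex of small out- or
  in-degree, those with a label class larger than b, and those without an arc between some
  disjoint s-sets make up less than a quarter, less than a quarter and at most a half of all
  labellings.\<close>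

lemma exists_good_labelling:
  fixes V :: "'a set" and T :: "('a \<times> 'a) set" and t K b s :: nat and r :: real
  defines "n \<equiv> card V" and "m \<equiv> 2 ^ t - 1" and "h \<equiv> 2 ^ (t - 1) - 1"
  assumes V: "finite V" and T: "tournament V T" and r: "0 < r" "r \<le> 1"
    and low_degree: "2 * real n * (real m * (real m - (1 - r) * real h) ^ (n - 1) / r ^ K) < real m ^ n / 4"
    and large_class: "real m * ((real m + 1) ^ n / 2 ^ (b + 1)) < real m ^ n / 4"
    and no_cross: "4 ^ n * (real (m ^ (n - s) * (2 ^ t * b) ^ s) / real (s ^ s)) \<le> real m ^ n / 2"
  shows "\<exists>l \<in> PiE V (\<lambda>_. labels t). good_labelling T V K s l"
proof -
  define \<Omega> where "\<Omega> = PiE V (\<lambda>_. labels t)"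
  define PQs where "PQs = {(P, Q). P \<subseteq> V \<and> Q \<subseteq> V \<and> P \<inter> Q = {} \<and> card P = s \<and> card Q = s}"
  define Bad where "Bad = (\<Union>u\<in>V. low_out_degree_labellings T V t K u)
      \<union> (\<Union>u\<in>V. low_out_degree_labellings (T\<inverse>) V t K u) \<union> (\<Union>c\<in>labels t. large_class_labellings V t b c)
      \<union> (\<Union>(P, Q)\<in>PQs. no_cross_arc_labellings T V t b P Q)"
  have fin_\<Omega>: "finite \<Omega>" unfolding \<Omega>_def using V finite_labels by (simp add: finite_PiE)
  have out: "real (card (\<Union>u\<in>V. low_out_degree_labellings T' V t K u))
      \<le> real n * (real m * (real m - (1 - r) * real h) ^ (n - 1) / r ^ K)" if "tournament V T'" for T'
    unfolding n_def using card_low_out_degree_labellings_le[OF V _ that r] r(1)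
    by (intro card_UN_le_uniform[OF V]) (simp add: m_def h_def pos_le_divide_eq)
  have big: "real (card (\<Union>c\<in>labels t. large_class_labellings V t b c))
      \<le> real m * ((real m + 1) ^ n / 2 ^ (b + 1))"
    unfolding m_def card_labels[symmetric] n_def
    by (intro card_UN_le_uniform[OF finite_labels])
      (use card_large_class_labellings_le[OF V] in \<open>simp add: card_labels pos_le_divide_eq\<close>)
  have "card Bad \<le> card (\<Union>u\<in>V. low_out_degree_labellings T V t K u)
      + card (\<Union>u\<in>V. low_out_degree_labellings (T\<inverse>) V t K u)
      + card (\<Union>c\<in>labels t. large_class_labellings V t b c)
      + card (\<Union>(P, Q)\<in>PQs. no_cross_arc_labellings T V t b P Q)"
    unfolding Bad_def by (meson card_Un_le add_le_mono le_trans order_refl)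
  then have "real (card Bad) \<le> real (card (\<Union>u\<in>V. low_out_degree_labellings T V t K u))
      + real (card (\<Union>u\<in>V. low_out_degree_labellings (T\<inverse>) V t K u))
      + real (card (\<Union>c\<in>labels t. large_class_labellings V t b c))
      + real (card (\<Union>(P, Q)\<in>PQs. no_cross_arc_labellings T V t b P Q))"
    by (simp only: of_nat_add[symmetric] of_nat_le_iff)
  moreover have "real (card \<Omega>) = real m ^ n"
    unfolding \<Omega>_def m_def n_def using V by (simp add: card_PiE card_labels)
  ultimately have "card Bad < card \<Omega>"
    using out[OF T] out[OF tournament_converse[OF T]] big
      card_UN_no_cross_arc_labellings_le[OF V T, where s = s and t = t and b = b]
      low_degree large_class no_cross
    unfolding PQs_def m_def n_def by linarith
  moreover have "Bad \<subseteq> \<Omega>"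
    unfolding Bad_def \<Omega>_def low_out_degree_labellings_def large_class_labellings_def
      no_cross_arc_labellings_def by auto
  then have "finite Bad" using fin_\<Omega> finite_subset by blast
  ultimately have "\<not> \<Omega> \<subseteq> Bad" using card_mono[of Bad \<Omega>] by linarith
  then obtain l where l: "l \<in> \<Omega>" "l \<notin> Bad" by blast
  have "good_labelling T V K s l"
    by (rule good_labelling_if_not_bad[OF V]) (use l in \<open>auto simp: \<Omega>_def Bad_def PQs_def\<close>)
  then show ?thesis using l unfolding \<Omega>_def by blast
qed

lemma k_strong_label_inversions:
  assumes V: "finite V" "k + 1 \<le> card V" and l: "l \<in> PiE V (\<lambda>_. labels t)"
    and good: "good_labelling T V (k - 1 + s) s l"
  shows "k_strong k V (invert_seq (label_inversions V l t) T)"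
proof -
  have "\<forall>v\<in>V. l v \<subseteq> {0..<t}" using l labels_subset_Pow by (auto simp: PiE_iff)
  note arc = mem_invert_seq_label_inversions_iff[OF this]
  show ?thesis
  proof (rule k_strong_if_degrees_and_cross_arcs[OF V])
    fix u assume u: "u \<in> V"
    have "{w \<in> V. (u, w) \<in> invert_seq (label_inversions V l t) T} = {w \<in> V. parity_arc T u w (l u) (l w)}"
      using arc[OF u] by blast
    then show "k - 1 + s \<le> card {w \<in> V. (u, w) \<in> invert_seq (label_inversions V l t) T}"
      using good u unfolding good_labelling_def by simp
    have "{w \<in> V. (w, u) \<in> invert_seq (label_inversions V l t) T} = {w \<in> V. parity_arc T w u (l w) (l u)}"
      using arc[OF _ u] by blast
    then show "k - 1 + s \<le> card {w \<in> V. (w, u) \<in> invert_seq (label_inversions V l t) T}"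
      using good u unfolding good_labelling_def by simp
  next
    fix P Q assume "P \<subseteq> V" "Q \<subseteq> V" "P \<inter> Q = {}" "card P = s" "card Q = s"
    then obtain a b where "a \<in> P" "b \<in> Q" "parity_arc T a b (l a) (l b)"
      using good unfolding good_labelling_def by blast
    then show "\<exists>a\<in>P. \<exists>b\<in>Q. (a, b) \<in> invert_seq (label_inversions V l t) T"
      using arc \<open>P \<subseteq> V\<close> \<open>Q \<subseteq> V\<close> by blast
  qed
qed

section \<open>Choice of the parameters\<close>

lemma exists_base_below_powr:
  fixes \<beta> p :: real
  assumes b0: "0 \<le> \<beta>" and bp: "\<beta> < p" and p1: "p \<le> 1"
  shows "\<exists>r. 0 < r \<and> r < 1 \<and> 1 - (1 - r) * p < r powr \<beta>"
proof -
  have p0: "p > 0" using b0 bp by linarith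
  define x where "x = \<beta> / p"
  define r where "r = (x + 1) / 2"
  have "x < 1" "0 \<le> x" using bp b0 p0 by (simp_all add: x_def divide_less_eq)
  then have r0: "r > 0" "r < 1" "r > \<beta> / p" by (auto simp: r_def x_def[symmetric])
  have rp: "r * p > \<beta>" using r0(3) p0 by (simp add: divide_less_eq mult.commute)
  define a where "a = 1 - (1 - r) * p"
  have "(1 - r) * p \<le> (1 - r)" using r0 p1 by (intro mult_left_le) auto
  then have "(1 - r) * p < 1" using r0 by linarith
  then have a0: "a > 0" unfolding a_def by simp
  have la: "ln a \<le> - ((1 - r) * p)" using ln_le_minus_one[OF a0] unfolding a_def by simp
  have "ln (1 / r) \<le> 1 / r - 1" using ln_le_minus_one r0 by simp
  then have lr: "ln r \<ge> 1 - 1 / r" using r0 by (simp add: ln_div)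
  have c0: "\<beta> * ln r \<ge> \<beta> * (1 - 1 / r)" using lr b0 by (simp add: mult_left_mono)
  have c1: "\<beta> * (1 - 1 / r) = - ((1 - r) * (\<beta> / r))" using r0 by (simp add: field_simps)
  have c2: "- ((1 - r) * (\<beta> / r)) > - ((1 - r) * p)"
  proof -
    have "\<beta> / r < p" using rp r0 by (simp add: divide_less_eq mult.commute)
    then have "(1 - r) * (\<beta> / r) < (1 - r) * p" using r0 by (intro mult_strict_left_mono) auto
    then show ?thesis by simp
  qed
  have "ln a < \<beta> * ln r" using la c0 c1 c2 by linarith
  then have "exp (ln a) < exp (\<beta> * ln r)" by simp
  moreover have "r powr \<beta> = exp (\<beta> * ln r)" using r0 by (simp add: powr_def)
  ultimately have "a < r powr \<beta>" using a0 by simp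
  then show ?thesis using r0 unfolding a_def by blast
qed

lemma low_degree_count_le_power:
  fixes m h n K :: nat and r \<beta> :: real
  defines "\<theta> \<equiv> (1 - (1 - r) * (real h / real m)) / r powr \<beta>"
  assumes m: "1 \<le> m" and hm: "h \<le> m" and r: "0 < r" "r < 1"
    and K: "real K \<le> \<beta> * real (n - 1)" and n: "1 \<le> n"
  shows "0 < \<theta>" and "real m * (real m - (1 - r) * real h) ^ (n - 1) / r ^ K \<le> real m ^ n * \<theta> ^ (n - 1)"
proof -
  define \<rho> where "\<rho> = 1 - (1 - r) * (real h / real m)"
  have m0: "real m > 0" using m by simp
  have "real h / real m \<le> 1" using hm m0 by (simp add: divide_le_eq)
  then have "(1 - r) * (real h / real m) \<le> 1 - r" using r by (intro mult_left_le) auto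
  then have \<rho>0: "\<rho> > 0" unfolding \<rho>_def using r by linarith
  have rb: "r powr \<beta> > 0" using r by simp
  show "0 < \<theta>" unfolding \<theta>_def \<rho>_def[symmetric] using \<rho>0 rb by simp
  have "real m - (1 - r) * real h = real m * \<rho>" unfolding \<rho>_def using m0 by (simp add: field_simps)
  then have "real m * (real m - (1 - r) * real h) ^ (n - 1) = real m * (real m * \<rho>) ^ (n - 1)" by simp
  also have "\<dots> = real m * real m ^ (n - 1) * \<rho> ^ (n - 1)" by (simp add: power_mult_distrib)
  also have "real m * real m ^ (n - 1) = real m ^ n" using n by (cases n) simp_all
  finally have e: "real m * (real m - (1 - r) * real h) ^ (n - 1) = real m ^ n * \<rho> ^ (n - 1)" .
  have "r ^ K = r powr (real K)" using r by (simp add: powr_realpow)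
  moreover have "r powr (\<beta> * real (n - 1)) \<le> r powr (real K)" using K r by (intro powr_mono') auto
  moreover have "r powr (\<beta> * real (n - 1)) = (r powr \<beta>) ^ (n - 1)"
    using rb by (simp add: powr_powr[symmetric] powr_realpow)
  ultimately have rK: "(r powr \<beta>) ^ (n - 1) \<le> r ^ K" by simp
  have "real m * (real m - (1 - r) * real h) ^ (n - 1) / r ^ K
      \<le> real m ^ n * \<rho> ^ (n - 1) / (r powr \<beta>) ^ (n - 1)"
    unfolding e using rK \<rho>0 m0 rb r(1) by (intro divide_left_mono) simp_all
  also have "\<dots> = real m ^ n * \<theta> ^ (n - 1)" unfolding \<theta>_def \<rho>_def[symmetric] by (simp add: power_divide)
  finally show "real m * (real m - (1 - r) * real h) ^ (n - 1) / r ^ K \<le> real m ^ n * \<theta> ^ (n - 1)" .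
qed

lemma low_degree_count_small:
  fixes m h n K :: nat and r \<beta> :: real
  defines "\<theta> \<equiv> (1 - (1 - r) * (real h / real m)) / r powr \<beta>"
  assumes m: "1 \<le> m" and hm: "h \<le> m" and r: "0 < r" "r < 1"
    and K: "real K \<le> \<beta> * real (n - 1)" and n: "1 \<le> n"
    and small: "real n * \<theta> ^ n < \<theta> / 8"
  shows "2 * real n * (real m * (real m - (1 - r) * real h) ^ (n - 1) / r ^ K) < real m ^ n / 4"
proof -
  note bound = low_degree_count_le_power[OF m hm r K n, folded \<theta>_def]
  have "\<theta> ^ n = \<theta> * \<theta> ^ (n - 1)" using n by (cases n) simp_all
  then have "\<theta> * (real n * \<theta> ^ (n - 1)) < \<theta> * (1 / 8)" using small by (simp add: mult.left_commute)
  then have "real n * \<theta> ^ (n - 1) < 1 / 8" using bound(1) by (simp only: mult_less_cancel_left_pos)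
  then have "2 * real n * (real m ^ n * \<theta> ^ (n - 1)) < real m ^ n / 4" using m
    by (simp add: algebra_simps)
  moreover have "2 * real n * (real m * (real m - (1 - r) * real h) ^ (n - 1) / r ^ K)
      \<le> 2 * real n * (real m ^ n * \<theta> ^ (n - 1))"
    using bound(2) by (intro mult_left_mono) auto
  ultimately show ?thesis by linarith
qed

lemma power_plus_one_le_exp:
  fixes x :: real
  assumes "0 < x"
  shows "(x + 1) ^ n \<le> x ^ n * exp (real n / x)"
proof -
  have "(x + 1) ^ n = x ^ n * (1 + 1 / x) ^ n" using assms by (simp add: field_simps flip: power_mult_distrib)
  also have "(1 + 1 / x) ^ n \<le> exp (1 / x) ^ n" by (intro power_mono) (use assms in auto)
  also have "exp (1 / x) ^ n = exp (real n / x)" by (simp add: exp_of_nat_mult[symmetric])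
  finally show ?thesis using assms by (simp add: mult_left_mono)
qed

lemma exp_le_two_power:
  assumes "0 < m" and "3 * n \<le> (b + 1) * m"
  shows "exp (3 * real n / (2 * real m)) \<le> 2 ^ (b + 1)"
proof -
  have "ln (1 / 2 :: real) \<le> 1 / 2 - 1" by (rule ln_le_minus_one) simp
  then have ln2: "1 / 2 \<le> ln (2 :: real)" by (simp add: ln_div)
  have "real (3 * n) \<le> real ((b + 1) * m)" using assms(2) by (simp only: of_nat_le_iff)
  then have "3 * real n / real m \<le> real (b + 1)" using assms(1) by (simp add: divide_le_eq algebra_simps)
  then have "3 * real n / real m * (1 / 2) \<le> real (b + 1) * ln 2" using ln2 by (intro mult_mono) auto
  then have "3 * real n / (2 * real m) \<le> real (b + 1) * ln 2" by simp
  then have "exp (3 * real n / (2 * real m)) \<le> exp (real (b + 1) * ln 2)" by simp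
  also have "\<dots> = exp (ln 2) ^ (b + 1)" by (rule exp_of_nat_mult)
  also have "\<dots> = 2 ^ (b + 1)" by simp
  finally show ?thesis .
qed

lemma large_class_count_small:
  fixes m n b :: nat
  assumes m: "1 \<le> m" and bm: "3 * n \<le> (b + 1) * m" and nm: "8 * m * m \<le> n"
  shows "real m * ((real m + 1) ^ n / 2 ^ (b + 1)) < real m ^ n / 4"
proof -
  have m0: "0 < real m" using m by simp
  have "real m * ((real m + 1) ^ n / 2 ^ (b + 1))
      \<le> real m * (real m ^ n * exp (real n / real m) / exp (3 * real n / (2 * real m)))"
    using power_plus_one_le_exp[OF m0] exp_le_two_power[OF _ bm] m0 by (intro mult_left_mono frac_le) auto
  also have "\<dots> = real m ^ n * (real m / exp (real n / (2 * real m)))"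
    by (simp add: field_simps flip: exp_add)
  also have "\<dots> < real m ^ n * (1 / 4)"
  proof -
    have "real (8 * m * m) \<le> real n" using nm by (simp only: of_nat_le_iff)
    then have "4 * real m \<le> real n / (2 * real m)" using m0 by (simp add: le_divide_eq)
    then have "1 + 4 * real m \<le> exp (real n / (2 * real m))"
      using exp_ge_add_one_self[of "real n / (2 * real m)"] by linarith
    then have "real m / exp (real n / (2 * real m)) < 1 / 4" using m0 by (simp add: divide_less_eq)
    then show ?thesis using m0 by (intro mult_strict_left_mono) auto
  qed
  finally show ?thesis by simp
qed

lemma no_cross_count_small_nat:
  fixes m t b n D s :: nat
  assumes m1: "m \<ge> 1" and tm: "2 ^ t \<le> 2 * m" and bm: "b * m \<le> 3 * n" and nD: "n \<le> D * s"
    and mD: "2 * (4 ^ D * 6 * D) \<le> m" and s1: "s \<ge> 1"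
  shows "2 * 4 ^ n * (2 ^ t * b) ^ s \<le> m ^ s * s ^ s"
proof -
  have "2 ^ t * b * m \<le> 2 * m * (b * m)" using tm by (simp add: mult.assoc mult.left_commute)
  also have "\<dots> \<le> 2 * m * (3 * n)" using bm by simp
  also have "\<dots> \<le> 2 * m * (3 * (D * s))" using nD by simp
  finally have "(2 ^ t * b) * m \<le> (6 * D * s) * m" by (simp add: algebra_simps)
  then have tb: "2 ^ t * b \<le> 6 * D * s" using m1 by simp
  have "(4::nat) ^ n \<le> 4 ^ (D * s)" using nD by (intro power_increasing) auto
  also have "\<dots> = (4 ^ D) ^ s" by (simp add: power_mult)
  finally have f4: "(4::nat) ^ n \<le> (4 ^ D) ^ s" .
  have p2: "(2 ^ t * b) ^ s \<le> (6 * D * s) ^ s" by (rule power_mono[OF tb]) simp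
  have "2 * 4 ^ n * (2 ^ t * b) ^ s \<le> 2 * (4 ^ D) ^ s * (6 * D * s) ^ s"
    using f4 p2 by (intro mult_mono) auto
  also have "\<dots> = 2 * (4 ^ D * 6 * D) ^ s * s ^ s" by (simp add: power_mult_distrib mult.assoc)
  also have "\<dots> \<le> 2 ^ s * (4 ^ D * 6 * D) ^ s * s ^ s"
  proof -
    have "(2::nat) ^ 1 \<le> 2 ^ s" using s1 by (intro power_increasing) auto
    then show ?thesis by (intro mult_right_mono) auto
  qed
  also have "\<dots> = (2 * (4 ^ D * 6 * D)) ^ s * s ^ s" by (simp only: power_mult_distrib mult.assoc)
  also have "\<dots> \<le> m ^ s * s ^ s" using mD by (intro mult_right_mono power_mono) auto
  finally show ?thesis .
qed

lemma no_cross_count_small: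
  fixes m t b n D s :: nat
  assumes m1: "m \<ge> 1" and tm: "2 ^ t \<le> 2 * m" and bm: "b * m \<le> 3 * n" and nD: "n \<le> D * s"
    and mD: "2 * (4 ^ D * 6 * D) \<le> m" and s1: "s \<ge> 1" and sn: "s \<le> n"
  shows "4 ^ n * (real (m ^ (n - s) * (2 ^ t * b) ^ s) / real (s ^ s)) \<le> real m ^ n / 2"
proof -
  have h: "real (2 * 4 ^ n * (2 ^ t * b) ^ s) \<le> real (m ^ s * s ^ s)"
    using no_cross_count_small_nat[OF m1 tm bm nD mD s1] by (simp only: of_nat_le_iff)
  have ss: "real (s ^ s) > 0" using s1 by simp
  have mn: "real m ^ n = real m ^ (n - s) * real m ^ s" using sn by (simp add: power_add[symmetric])
  have "4 ^ n * (real (m ^ (n - s) * (2 ^ t * b) ^ s) / real (s ^ s))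
      = real m ^ (n - s) * (real (2 * 4 ^ n * (2 ^ t * b) ^ s) / real (s ^ s)) / 2"
    by (simp add: field_simps)
  also have "\<dots> \<le> real m ^ (n - s) * (real (m ^ s * s ^ s) / real (s ^ s)) / 2"
    using h ss by (intro divide_right_mono mult_left_mono) (auto simp: divide_right_mono)
  also have "\<dots> = real m ^ n / 2" using ss mn by simp
  finally show ?thesis .
qed

lemma inverse_two_plus_le:
  fixes \<epsilon> :: real assumes "0 < \<epsilon>" "\<epsilon> \<le> 1"
  shows "1 / (2 + \<epsilon>) \<le> 1/2 - \<epsilon>/6"
proof -
  have "\<epsilon> * \<epsilon> \<le> \<epsilon>" using assms by (simp add: mult_left_le_one_le)
  then have "6 \<le> (2 + \<epsilon>) * (3 - \<epsilon>)" by (simp add: algebra_simps)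
  then have "1 \<le> (2 + \<epsilon>) * ((3 - \<epsilon>) / 6)" by simp
  then have "1 / (2 + \<epsilon>) \<le> (3 - \<epsilon>) / 6" using assms by (simp add: divide_le_eq mult.commute)
  then show ?thesis by simp
qed

lemma le_div_plus_one_mult:
  fixes n m :: nat
  assumes "0 < m"
  shows "n \<le> (n div m + 1) * m"
proof -
  have "n div m * m + n mod m = n" by (rule div_mult_mod_eq)
  moreover have "n mod m < m" using assms by simp
  ultimately show ?thesis by (simp only: distrib_right mult_1)
qed

lemma degree_threshold_le:
  fixes \<epsilon> :: real
  assumes "0 < \<epsilon>" "2 \<le> D" "2 \<le> n" "1 \<le> k" "2 * real k + 1 + \<epsilon> * real k \<le> real n"
  shows "real (k - 1 + (n div D + 1)) \<le> (1 / (2 + \<epsilon>) + 2 / real D) * real (n - 1)"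
proof -
  have "(2 + \<epsilon>) * real k \<le> real n - 1" using assms(5) by (simp add: algebra_simps)
  then have k: "real k \<le> (real n - 1) / (2 + \<epsilon>)" using assms(1) by (simp add: le_divide_eq mult.commute)
  have "real D * real (n div D) \<le> real n"
    by (metis of_nat_le_iff of_nat_mult times_div_less_eq_dividend)
  then have "real (n div D) \<le> real n / real D" using assms(2) by (simp add: le_divide_eq mult.commute)
  also have "\<dots> \<le> 2 * (real n - 1) / real D" using assms(2,3) by (intro divide_right_mono) auto
  finally have "real (k - 1 + (n div D + 1)) \<le> (real n - 1) / (2 + \<epsilon>) + 2 * (real n - 1) / real D"
    using k assms(4) by (simp add: of_nat_diff)
  also have "\<dots> = (1 / (2 + \<epsilon>) + 2 / real D) * real (n - 1)" using assms(3) by (simp add: algebra_simps)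
  finally show ?thesis .
qed

lemma degree_exponent_less_half:
  fixes \<epsilon> :: real
  assumes \<epsilon>: "0 < \<epsilon>" "\<epsilon> \<le> 1" and D: "24 / \<epsilon> \<le> real D" and m: "12 * D \<le> m" "m = 2 * h + 1"
  shows "1 / (2 + \<epsilon>) + 2 / real D < real h / real m"
proof -
  have "24 \<le> 24 / \<epsilon>" using \<epsilon> by (simp add: le_divide_eq)
  then have D24: "24 \<le> real D" using D by linarith
  have "real (12 * D) \<le> real m" using m(1) by (simp only: of_nat_le_iff)
  then have "12 * (24 / \<epsilon>) \<le> real m" using D by simp
  then have "6 < real m * \<epsilon>" using \<epsilon> by (simp add: divide_le_eq)
  moreover have "0 < real m" using m(2) by simp
  ultimately have m6: "1 / (2 * real m) < \<epsilon> / 12" using \<epsilon> by (simp add: field_simps)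
  have "2 / real D \<le> 2 / (24 / \<epsilon>)" using D D24 \<epsilon> by (intro divide_left_mono) auto
  then have "2 / real D \<le> \<epsilon> / 12" by simp
  moreover have "real h / real m = 1 / 2 - 1 / (2 * real m)" using m(2) by (simp add: field_simps)
  ultimately show ?thesis using inverse_two_plus_le[OF \<epsilon>] m6 by linarith
qed

lemma eventually_mult_power_less:
  fixes \<theta> c :: real
  assumes "0 < \<theta>" "\<theta> < 1" "0 < c"
  obtains N where "\<And>n. N \<le> n \<Longrightarrow> real n * \<theta> ^ n < c"
proof -
  have "(\<lambda>n. real n * \<theta> ^ n) \<longlonglongrightarrow> 0" using assms by (intro powser_times_n_limit_0) simp
  then have "eventually (\<lambda>n. real n * \<theta> ^ n < c) sequentially"
    using assms(3) by (intro order_tendstoD(2)) auto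
  then show ?thesis using that unfolding eventually_sequentially by blast
qed

lemma dimension_parameters:
  fixes \<epsilon> :: real
  assumes \<epsilon>: "0 < \<epsilon>" "\<epsilon> \<le> 1"
  obtains D t :: nat where "2 \<le> D" "24 / \<epsilon> \<le> real D" "2 * (4 ^ D * 6 * D) \<le> 2 ^ t - 1"
    "12 * D \<le> 2 ^ t - 1" "2 ^ t - 1 = 2 * (2 ^ (t - 1) - 1) + (1::nat)"
proof -
  define D where "D = nat \<lceil>24 / \<epsilon>\<rceil>"
  define t where "t = 12 * 4 ^ D * D + 1"
  have D: "24 / \<epsilon> \<le> real D" unfolding D_def by linarith
  moreover have "24 \<le> 24 / \<epsilon>" using \<epsilon> by (simp add: le_divide_eq)
  ultimately have "2 \<le> D" by linarith
  have "(2::nat) ^ t = 2 * 2 ^ (t - 1)" by (simp add: t_def)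
  moreover have "(1::nat) \<le> 2 ^ (t - 1)" by simp
  ultimately have odd: "2 ^ t - 1 = 2 * (2 ^ (t - 1) - 1) + (1::nat)" by linarith
  have "t < 2 ^ t" by simp
  then have big: "12 * 4 ^ D * D \<le> 2 ^ t - 1" unfolding t_def by linarith
  then have "2 * (4 ^ D * 6 * D) \<le> 2 ^ t - 1" by simp
  moreover have "12 * D \<le> 2 ^ t - 1" by (rule le_trans[OF _ big]) simp
  ultimately show ?thesis by (rule that[OF \<open>2 \<le> D\<close> D _ _ odd])
qed

text \<open>The degree threshold is \<open>k - 1 + n / D \<approx> \<beta> n\<close> with \<open>\<beta> < 1/2\<close>, while a fixed arc is kept with
  probability \<open>p = h / m\<close> just below 1/2. Choosing \<open>r\<close> with \<open>1 - (1 - r) p < r powr \<beta>\<close> makes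
  \<open>\<theta> < 1\<close>, so the low-degree count decays like \<open>n \<theta> ^ n\<close>.\<close>

lemma exists_good_labelling_large:
  fixes \<epsilon> :: real
  assumes \<epsilon>: "0 < \<epsilon>" "\<epsilon> \<le> 1"
  obtains D t n_min :: nat where
    "\<And>k (V :: 'a set) T. finite V \<Longrightarrow> tournament V T \<Longrightarrow> 1 \<le> k \<Longrightarrow> n_min \<le> card V \<Longrightarrow>
      2 * real k + 1 + \<epsilon> * real k \<le> real (card V) \<Longrightarrow>
      \<exists>l \<in> PiE V (\<lambda>_. labels t). good_labelling T V (k - 1 + (card V div D + 1)) (card V div D + 1) l"
proof -
  obtain D t where "2 \<le> D" and D: "24 / \<epsilon> \<le> real D" and mD: "2 * (4 ^ D * 6 * D) \<le> 2 ^ t - 1"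
    and "12 * D \<le> 2 ^ t - 1" and "2 ^ t - 1 = 2 * (2 ^ (t - 1) - 1) + (1::nat)"
    using dimension_parameters[OF \<epsilon>] .
  define m where "m = (2::nat) ^ t - 1"
  define h where "h = (2::nat) ^ (t - 1) - 1"
  note mh = \<open>2 ^ t - 1 = 2 * (2 ^ (t - 1) - 1) + 1\<close>[folded m_def h_def]
  note mD = mD[folded m_def] and mD' = \<open>12 * D \<le> 2 ^ t - 1\<close>[folded m_def]
  have m1: "1 \<le> m" and tm: "2 ^ t \<le> 2 * m" and hm: "h \<le> m" using mh unfolding m_def by simp_all
  define p where "p = real h / real m"
  define \<beta> where "\<beta> = 1 / (2 + \<epsilon>) + 2 / real D"
  have "0 \<le> \<beta>" "\<beta> < p"
    using \<epsilon> degree_exponent_less_half[OF \<epsilon> D mD' mh] unfolding \<beta>_def p_def by simp_all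
  moreover have "p \<le> 1" using hm m1 unfolding p_def by (simp add: divide_le_eq)
  ultimately obtain r where r: "0 < r" "r < 1" "1 - (1 - r) * p < r powr \<beta>"
    using exists_base_below_powr by blast
  define \<theta> where "\<theta> = (1 - (1 - r) * p) / r powr \<beta>"
  have "(1 - r) * p \<le> 1 - r" using r \<open>p \<le> 1\<close> hm unfolding p_def by (intro mult_left_le) auto
  then have "(1 - r) * p < 1" using r by linarith
  then have "0 < \<theta>" "\<theta> < 1" using r unfolding \<theta>_def by simp_all
  then obtain N where N: "\<And>n. N \<le> n \<Longrightarrow> real n * \<theta> ^ n < \<theta> / 8"
    using eventually_mult_power_less[of \<theta> "\<theta> / 8"] by auto
  show ?thesis
  proof (rule that[of "max (max N 2) (8 * m * m)" t D])
    fix k and V :: "'a set" and T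
    assume V: "finite V" and T: "tournament V T" and k: "1 \<le> k"
      and n: "max (max N 2) (8 * m * m) \<le> card V" and nk: "2 * real k + 1 + \<epsilon> * real k \<le> real (card V)"
    let ?n = "card V" and ?s = "card V div D + 1"
    have "N \<le> ?n" "1 \<le> ?n" "2 \<le> ?n" using n by auto
    have "real (k - 1 + ?s) \<le> \<beta> * real (?n - 1)"
      using degree_threshold_le[OF \<epsilon>(1) \<open>2 \<le> D\<close> \<open>2 \<le> ?n\<close> k nk] unfolding \<beta>_def .
    from low_degree_count_small[OF m1 hm r(1,2) this \<open>1 \<le> ?n\<close> N[OF \<open>N \<le> ?n\<close>, unfolded \<theta>_def p_def]]
    have low_degree: "2 * real ?n * (real m * (real m - (1 - r) * real h) ^ (?n - 1) / r ^ (k - 1 + ?s))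
        < real m ^ ?n / 4" .
    have large_class: "real m * ((real m + 1) ^ ?n / 2 ^ (3 * ?n div m + 1)) < real m ^ ?n / 4"
      using large_class_count_small[OF m1 le_div_plus_one_mult] m1 n by simp
    have "?n div D \<le> ?n div 2" using \<open>2 \<le> D\<close> by (simp add: div_le_mono2)
    then have "?s \<le> ?n" using n by linarith
    moreover have "?n \<le> D * ?s" using le_div_plus_one_mult[of D ?n] \<open>2 \<le> D\<close> by (simp add: mult.commute)
    ultimately have no_cross: "4 ^ ?n * (real (m ^ (?n - ?s) * (2 ^ t * (3 * ?n div m)) ^ ?s) / real (?s ^ ?s))
        \<le> real m ^ ?n / 2"
      by (intro no_cross_count_small[OF m1 tm div_times_less_eq_dividend _ mD]) simp_all
    show "\<exists>l \<in> PiE V (\<lambda>_. labels t). good_labelling T V (k - 1 + ?s) ?s l"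
      using exists_good_labelling[OF V T r(1) less_imp_le[OF r(2)]] low_degree large_class no_cross
      unfolding m_def h_def by blast
  qed
qed

lemma sinv_bounded_large:
  fixes \<epsilon> :: real
  assumes "0 < \<epsilon>" "\<epsilon> \<le> 1"
  obtains t n_min :: nat where "\<And>k (V :: 'a set) T. finite V \<Longrightarrow> tournament V T \<Longrightarrow> 1 \<le> k \<Longrightarrow>
      n_min \<le> card V \<Longrightarrow> 2 * real k + 1 + \<epsilon> * real k \<le> real (card V) \<Longrightarrow> sinv k V T \<le> enat t"
proof -
  obtain D t n_min :: nat where good: "\<And>k (V :: 'a set) T. finite V \<Longrightarrow> tournament V T \<Longrightarrow> 1 \<le> k \<Longrightarrow>
      n_min \<le> card V \<Longrightarrow> 2 * real k + 1 + \<epsilon> * real k \<le> real (card V) \<Longrightarrow>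
      \<exists>l \<in> PiE V (\<lambda>_. labels t). good_labelling T V (k - 1 + (card V div D + 1)) (card V div D + 1) l"
    by (rule exists_good_labelling_large[OF assms]) (rule that)
  show ?thesis
  proof (rule that[of n_min t])
    fix k and V :: "'a set" and T
    assume V: "finite V" and T: "tournament V T" and k: "1 \<le> k" and n: "n_min \<le> card V"
      and nk: "2 * real k + 1 + \<epsilon> * real k \<le> real (card V)"
    obtain l where l: "l \<in> PiE V (\<lambda>_. labels t)"
      and "good_labelling T V (k - 1 + (card V div D + 1)) (card V div D + 1) l"
      using good[OF V T k n nk] by blast
    moreover have "0 \<le> \<epsilon> * real k" using assms(1) by simp
    then have "real (k + 1) \<le> real (card V)" using nk by simp
    then have "k + 1 \<le> card V" by (simp only: of_nat_le_iff)
    ultimately have "k_strong k V (invert_seq (label_inversions V l t) T)"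
      using k_strong_label_inversions[OF V] by blast
    moreover have "set (label_inversions V l t) \<subseteq> Pow V" by (auto simp: label_inversions_def)
    ultimately have "sinv k V T \<le> enat (length (label_inversions V l t))"
      by (intro sinv_le_length)
    then show "sinv k V T \<le> enat t" by (simp add: label_inversions_def)
  qed
qed

lemma sinv_bounded:
  fixes \<epsilon> :: real
  assumes "0 < \<epsilon>"
  shows "\<exists>N. \<forall>k (V :: 'a set) T. 1 \<le> k \<longrightarrow> finite V \<longrightarrow> tournament V T \<longrightarrow>
           2 * real k + 1 + \<epsilon> * real k \<le> real (card V) \<longrightarrow> sinv k V T \<le> enat N"
proof -
  have "0 < min \<epsilon> 1" "min \<epsilon> 1 \<le> 1" using assms by auto
  then obtain t n_min :: nat where large: "\<And>k (V :: 'a set) T. finite V \<Longrightarrow> tournament V T \<Longrightarrow> 1 \<le> k \<Longrightarrow>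
      n_min \<le> card V \<Longrightarrow> 2 * real k + 1 + min \<epsilon> 1 * real k \<le> real (card V) \<Longrightarrow> sinv k V T \<le> enat t"
    by (rule sinv_bounded_large) (rule that)
  have "sinv k V T \<le> enat (max t (2 ^ n_min))"
    if "1 \<le> k" "finite V" "tournament V T" "2 * real k + 1 + \<epsilon> * real k \<le> real (card V)"
    for k and V :: "'a set" and T
  proof (cases "n_min \<le> card V")
    case True
    have "min \<epsilon> 1 * real k \<le> \<epsilon> * real k" by (intro mult_right_mono) auto
    then have "sinv k V T \<le> enat t" using large[OF that(2,3,1) True] that(4) by linarith
    then show ?thesis by (meson enat_ord_simps(1) max.cobounded1 order_trans)
  next
    case False
    have "0 \<le> \<epsilon> * real k" using assms by simp
    then have "real (2 * k + 1) \<le> real (card V)" using that(4) by simp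
    then have "2 * k + 1 \<le> card V" by (simp only: of_nat_le_iff)
    then have small: "sinv k V T \<le> enat (2 ^ card V)" using sinv_le_two_pow_card that(2,3) by blast
    have "(2::nat) ^ card V \<le> 2 ^ n_min" using False by (intro power_increasing) auto
    then have "enat (2 ^ card V) \<le> enat (max t (2 ^ n_min))" by (simp add: le_max_iff_disj)
    with small show ?thesis by (rule order_trans)
  qed
  then show ?thesis by blast
qed

theorem theorem1p15:
  shows "\<exists>f :: real \<Rightarrow> nat. \<forall>\<epsilon>::real. \<forall>k::nat. \<forall>(V::nat set) T.
     \<epsilon> > 0 \<longrightarrow> k \<ge> 1 \<longrightarrow> finite V \<longrightarrow> tournament V T \<longrightarrow>
     real (card V) \<ge> 2 * real k + 1 + \<epsilon> * real k \<longrightarrow>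
     sinv k V T \<le> enat (f \<epsilon>)"
proof -
  have "\<forall>\<epsilon>. \<exists>N. 0 < \<epsilon> \<longrightarrow> (\<forall>k (V :: nat set) T. 1 \<le> k \<longrightarrow> finite V \<longrightarrow> tournament V T \<longrightarrow>
           2 * real k + 1 + \<epsilon> * real k \<le> real (card V) \<longrightarrow> sinv k V T \<le> enat N)"
    using sinv_bounded by blast
  then obtain f where "\<forall>\<epsilon>. 0 < \<epsilon> \<longrightarrow> (\<forall>k (V :: nat set) T. 1 \<le> k \<longrightarrow> finite V \<longrightarrow> tournament V T \<longrightarrow>
           2 * real k + 1 + \<epsilon> * real k \<le> real (card V) \<longrightarrow> sinv k V T \<le> enat (f \<epsilon>))"
    by metis
  then show ?thesis by blast
qed

end
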